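(* Let $q=p^r$ be a prime power, $k=\mathbb{F}_{q^2}$, $n\ge 2$ and $V=k^{2n}$. Let $$G_n=\Big\{\begin{pmatrix} I & O\\ B & I\end{pmatrix}:\ B\in M_n(\mathbb{F}_{q^2}),\ \overline{B}=-B^T\Big\},$$ where $I,O$ are the $n\times n$ identity and zero matrices and $\overline{B}_{ij}=B_{ij}^q$. Then the action of $G_n$ on $V$ is not coregular and does not have the direct summand property.
   Context: $k[V]$ is the coordinate ring (symmetric algebra on $V^*$), graded, with $G$ acting by graded algebra automorphisms. The action of a finite group $G\le\mathrm{GL}(V)$ is coregular if $k[V]^G$ is generated by $\dim V$ algebraically independent homogeneous invariants; it has the direct summand property if there is a surjective graded $k[V]^G$-linear map $k[V]\to k[V]^G$. *)

theory Defs
  imports "HOL-Library.Poly_Mapping" "HOL-Computational_Algebra.Primes"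
begin

text \<open>The variable x_i
  (i < N) is the i-th coordinate function on V = k^N.\<close>

type_synonym 'k mpoly = "(nat \<Rightarrow>\<^sub>0 nat) \<Rightarrow>\<^sub>0 'k"

definition mvar :: "nat \<Rightarrow> 'k::comm_ring_1 mpoly" where
  "mvar i = Poly_Mapping.single (Poly_Mapping.single i 1) 1"

definition mconst :: "'k::comm_ring_1 \<Rightarrow> 'k mpoly" where
  "mconst c = Poly_Mapping.single 0 c"

definition msubst :: "(nat \<Rightarrow> 'k::comm_ring_1 mpoly) \<Rightarrow> 'k mpoly \<Rightarrow> 'k mpoly" where
  "msubst \<sigma> f = (\<Sum>m\<in>Poly_Mapping.keys f. mconst (Poly_Mapping.lookup f m) *
                      (\<Prod>i\<in>Poly_Mapping.keys m. \<sigma> i ^ Poly_Mapping.lookup m i))"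

definition polys_in :: "nat \<Rightarrow> 'k::comm_ring_1 mpoly set" where
  "polys_in N = {f. \<forall>m\<in>Poly_Mapping.keys f. Poly_Mapping.keys m \<subseteq> {..<N}}"

definition homogeneous :: "nat \<Rightarrow> 'k::comm_ring_1 mpoly \<Rightarrow> bool" where
  "homogeneous d f \<longleftrightarrow> (\<forall>m\<in>Poly_Mapping.keys f. (\<Sum>i\<in>Poly_Mapping.keys m. Poly_Mapping.lookup m i) = d)"

text \<open>Action of an N x N matrix g (entries g i j, i,j < N) on k[V]:
  f \<mapsto> f \<circ> g, i.e. x_i \<mapsto> sum_j g_ij x_j.\<close>
definition mat_act :: "nat \<Rightarrow> (nat \<Rightarrow> nat \<Rightarrow> 'k::comm_ring_1) \<Rightarrow> 'k mpoly \<Rightarrow> 'k mpoly" where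
  "mat_act N g f = msubst (\<lambda>i. \<Sum>j<N. mconst (g i j) * mvar j) f"

definition invariants :: "nat \<Rightarrow> (nat \<Rightarrow> nat \<Rightarrow> 'k::comm_ring_1) set \<Rightarrow> 'k mpoly set" where
  "invariants N G = {f \<in> polys_in N. \<forall>g\<in>G. mat_act N g f = f}"

definition coregular :: "nat \<Rightarrow> (nat \<Rightarrow> nat \<Rightarrow> 'k::comm_ring_1) set \<Rightarrow> bool" where
  "coregular N G \<longleftrightarrow>
     (\<exists>F :: nat \<Rightarrow> 'k mpoly.
        (\<forall>i<N. F i \<in> invariants N G \<and> (\<exists>d. homogeneous d (F i))) \<and>
        (\<forall>P\<in>polys_in N. msubst F P = 0 \<longrightarrow> P = 0) \<and>
        (\<forall>f\<in>invariants N G. \<exists>P\<in>polys_in N. f = msubst F P))"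

definition direct_summand_property :: "nat \<Rightarrow> (nat \<Rightarrow> nat \<Rightarrow> 'k::comm_ring_1) set \<Rightarrow> bool" where
  "direct_summand_property N G \<longleftrightarrow>
     (\<exists>\<pi> :: 'k mpoly \<Rightarrow> 'k mpoly.
        (\<forall>f\<in>polys_in N. \<pi> f \<in> invariants N G) \<and>
        (\<forall>h\<in>invariants N G. \<exists>f\<in>polys_in N. \<pi> f = h) \<and>
        (\<forall>a\<in>invariants N G. \<forall>b\<in>invariants N G. \<forall>f\<in>polys_in N. \<forall>g\<in>polys_in N.
            \<pi> (a * f + b * g) = a * \<pi> f + b * \<pi> g) \<and>
        (\<forall>d. \<forall>f\<in>polys_in N. homogeneous d f \<longrightarrow> homogeneous d (\<pi> f)))"

definition Gn :: "nat \<Rightarrow> nat \<Rightarrow> (nat \<Rightarrow> nat \<Rightarrow> 'k::comm_ring_1) set" where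
  "Gn q n = {M. \<exists>B :: nat \<Rightarrow> nat \<Rightarrow> 'k.
       (\<forall>i<n. \<forall>j<n. B i j ^ q = - B j i) \<and>
       M = (\<lambda>i j. if i = j then 1
                  else if n \<le> i \<and> i < 2 * n \<and> j < n then B (i - n) j else 0)}"

end

theory Submission
  imports Defs "HOL-Computational_Algebra.Polynomial" "HOL-Library.FuncSet"
begin

text \<open>
  Write \<open>x\<^sub>j = mvar j\<close>, \<open>y\<^sub>a = mvar (n + a)\<close>; the element of \<open>G\<^sub>n\<close> given by \<open>B\<close> fixes the \<open>x\<^sub>j\<close> and sends
  \<open>y\<^sub>a\<close> to \<open>y\<^sub>a + \<Sum>\<^sub>j B\<^sub>a\<^sub>j x\<^sub>j\<close>.  Key computation (invariant_no_pure_y_power): for \<open>0 < d < q\<^sup>2\<close> no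
  homogeneous invariant of degree \<open>d\<close> contains \<open>y\<^sub>a\<^sup>d\<close>, because its part in \<open>x\<^sub>b, y\<^sub>a\<close> is invariant under
  all shears \<open>y\<^sub>a \<mapsto> y\<^sub>a + t x\<^sub>b\<close>.  Hence the linear invariants are the linear forms in the \<open>x\<^sub>j\<close>, and
  the invariant \<open>h = \<Sum>\<^sub>j x\<^sub>j\<^sup>q y\<^sub>j + x\<^sub>j y\<^sub>j\<^sup>q\<close> is not \<open>\<Sum>\<^sub>j x\<^sub>j c\<^sub>j\<close> with invariant \<open>c\<^sub>j\<close>.
  A graded retraction \<open>k[V] \<rightarrow> k[V]\<^sup>G\<close> would force exactly such a representation, so the direct
  summand property fails.  For coregularity, free generators of degree one are linear forms in
  the \<open>x\<^sub>j\<close> spanning them, so at most \<open>n\<close> generators are non-linear.  Writing the orbit norms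
  \<open>N\<^sub>a = \<Prod>\<^sub>w (y\<^sub>a + w)\<close> and \<open>h\<close> through the generators and discarding the linear ones gives \<open>n + 1\<close>
  polynomials in \<open>\<le> n\<close> variables: dependent by counting over the finite field, but independent
  because setting \<open>x = 0\<close> maps them to \<open>y\<^sub>0\<^sup>M\<^sup>0, \<dots>, y\<^sub>n\<^sub>-\<^sub>1\<^sup>M\<^sup>n\<^sup>-\<^sup>1, 0\<close> with the last one non-zero.
\<close>

alias lookup = Poly_Mapping.lookup
alias keys = Poly_Mapping.keys
alias single = Poly_Mapping.single

section \<open>Substitution homomorphisms\<close>

definition mon :: "(nat \<Rightarrow> 'k::comm_ring_1 mpoly) \<Rightarrow> (nat \<Rightarrow>\<^sub>0 nat) \<Rightarrow> 'k mpoly" where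
  "mon \<sigma> m = (\<Prod>i\<in>keys m. \<sigma> i ^ lookup m i)"

lemma msubst_mon: "msubst \<sigma> f = (\<Sum>m\<in>keys f. mconst (lookup f m) * mon \<sigma> m)"
  by (simp add: msubst_def mon_def)

lemma mconst_add: "mconst (a + b) = mconst a + mconst b"
  by (simp add: mconst_def single_add)
lemma mconst_mult: "mconst (a * b) = mconst a * mconst b"
  by (simp add: mconst_def mult_single)
lemma mconst_0[simp]: "mconst 0 = 0"
  by (simp add: mconst_def)
lemma mconst_1[simp]: "mconst 1 = 1"
  by (simp add: mconst_def)
lemma mconst_uminus: "mconst (- a) = - mconst a"
  by (simp add: mconst_def single_uminus)
lemma mconst_power: "mconst (a ^ k) = mconst a ^ k"
  by (induction k) (simp_all add: mconst_mult)
lemma mconst_sum: "mconst (sum f A) = (\<Sum>x\<in>A. mconst (f x))"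
  by (induction A rule: infinite_finite_induct) (simp_all add: mconst_add)
lemma mconst_prod: "mconst (prod f A) = (\<Prod>x\<in>A. mconst (f x))"
  by (induction A rule: infinite_finite_induct) (simp_all add: mconst_mult)
lemma mconst_eq_iff[simp]: "mconst a = mconst b \<longleftrightarrow> a = b"
  unfolding mconst_def by (metis lookup_single_eq)
lemma lookup_mconst: "lookup (mconst c) m = (if m = 0 then c else 0)"
  by (simp add: mconst_def lookup_single)
lemma of_nat_mpoly: "(of_nat n :: 'k::comm_ring_1 mpoly) = mconst (of_nat n)"
  by (simp add: mconst_def)
lemma mconst_mult_single: "mconst c * single m a = single m (c * a)"
  by (simp add: mconst_def mult_single)

lemma poly_expand: "f = (\<Sum>m\<in>keys f. single m (lookup f m))"
proof (rule poly_mapping_eqI)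
  fix k
  have "lookup (\<Sum>m\<in>keys f. single m (lookup f m)) k = (\<Sum>m\<in>keys f. if m = k then lookup f m else 0)"
    by (simp add: lookup_sum lookup_single when_def eq_commute)
  then show "lookup f k = lookup (\<Sum>m\<in>keys f. single m (lookup f m)) k"
    by (simp add: sum.delta in_keys_iff)
qed


lemma msubst_superset:
  assumes "finite S" "keys f \<subseteq> S"
  shows "msubst \<sigma> f = (\<Sum>m\<in>S. mconst (lookup f m) * mon \<sigma> m)"
  unfolding msubst_mon by (rule sum.mono_neutral_left) (use assms in \<open>auto simp: in_keys_iff\<close>)

lemma mon_superset:
  assumes "finite S" "keys m \<subseteq> S"
  shows "mon \<sigma> m = (\<Prod>i\<in>S. \<sigma> i ^ lookup m i)"
  unfolding mon_def by (rule prod.mono_neutral_left) (use assms in \<open>auto simp: in_keys_iff\<close>)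

lemma mon_add: "mon \<sigma> (a + b) = mon \<sigma> a * mon \<sigma> b"
proof -
  let ?S = "keys a \<union> keys b"
  have "mon \<sigma> (a + b) = (\<Prod>i\<in>?S. \<sigma> i ^ lookup (a + b) i)"
    by (rule mon_superset) (use keys_add[of a b] in auto)
  also have "\<dots> = (\<Prod>i\<in>?S. \<sigma> i ^ lookup a i) * (\<Prod>i\<in>?S. \<sigma> i ^ lookup b i)"
    by (simp add: lookup_add power_add prod.distrib)
  finally show ?thesis by (simp add: mon_superset[symmetric])
qed


lemma mult_expand:
  "f * g = (\<Sum>m1\<in>keys f. \<Sum>m2\<in>keys g. single (m1 + m2) (lookup f m1 * lookup g m2))"
  apply (subst (1) poly_expand[of f], subst (1) poly_expand[of g])
  by (simp add: sum_distrib_left sum_distrib_right mult_single) (subst sum.swap, rule refl)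

lemma msubst_add: "msubst \<sigma> (f + g) = msubst \<sigma> f + msubst \<sigma> g"
proof -
  let ?S = "keys f \<union> keys g"
  have "msubst \<sigma> (f + g) = (\<Sum>m\<in>?S. mconst (lookup (f + g) m) * mon \<sigma> m)"
    by (rule msubst_superset) (use keys_add[of f g] in auto)
  also have "\<dots> = (\<Sum>m\<in>?S. mconst (lookup f m) * mon \<sigma> m) + (\<Sum>m\<in>?S. mconst (lookup g m) * mon \<sigma> m)"
    by (simp add: lookup_add mconst_add distrib_right sum.distrib)
  finally show ?thesis by (simp add: msubst_superset[symmetric])
qed

lemma msubst_zero[simp]: "msubst \<sigma> 0 = 0"
  by (simp add: msubst_def)

lemma msubst_sum: "msubst \<sigma> (sum f A) = (\<Sum>x\<in>A. msubst \<sigma> (f x))"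
  by (induction A rule: infinite_finite_induct) (simp_all add: msubst_add)

lemma msubst_single: "msubst \<sigma> (single m c) = mconst c * mon \<sigma> m"
  using msubst_superset[of "{m}" "single m c" \<sigma>] by simp

lemma msubst_mult: "msubst \<sigma> (f * g) = msubst \<sigma> f * msubst \<sigma> g"
proof -
  have "msubst \<sigma> (f * g) = (\<Sum>m1\<in>keys f. \<Sum>m2\<in>keys g.
      mconst (lookup f m1 * lookup g m2) * mon \<sigma> (m1 + m2))"
    by (subst mult_expand) (simp add: msubst_sum msubst_single)
  also have "\<dots> = (\<Sum>m1\<in>keys f. \<Sum>m2\<in>keys g.
      (mconst (lookup f m1) * mon \<sigma> m1) * (mconst (lookup g m2) * mon \<sigma> m2))"
    by (intro sum.cong refl) (simp add: mconst_mult mon_add mult_ac)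
  finally show ?thesis unfolding msubst_mon sum_product .
qed

lemma msubst_mconst[simp]: "msubst \<sigma> (mconst c) = mconst c"
  by (simp add: mconst_def msubst_single mon_def)

lemma msubst_one[simp]: "msubst \<sigma> 1 = 1"
  using msubst_mconst[of \<sigma> 1] by simp

lemma msubst_mvar[simp]: "msubst \<sigma> (mvar i) = \<sigma> i"
  by (simp add: mvar_def msubst_single mon_def)

lemma msubst_uminus: "msubst \<sigma> (- f) = - msubst \<sigma> f"
  by (metis add.right_inverse add_eq_0_iff2 msubst_add msubst_zero)

lemma msubst_diff: "msubst \<sigma> (f - g) = msubst \<sigma> f - msubst \<sigma> g"
  unfolding diff_conv_add_uminus msubst_add msubst_uminus ..

lemma msubst_power: "msubst \<sigma> (f ^ k) = msubst \<sigma> f ^ k"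
  by (induction k) (simp_all add: msubst_mult)

lemma msubst_prod: "msubst \<sigma> (prod f A) = (\<Prod>x\<in>A. msubst \<sigma> (f x))"
  by (induction A rule: infinite_finite_induct) (simp_all add: msubst_mult)

lemma msubst_comp: "msubst \<sigma> (msubst \<tau> f) = msubst (\<lambda>i. msubst \<sigma> (\<tau> i)) f"
proof -
  have "msubst \<sigma> (mon \<tau> m) = mon (\<lambda>i. msubst \<sigma> (\<tau> i)) m" for m
    by (simp add: mon_def msubst_prod msubst_power)
  then show ?thesis
    unfolding msubst_mon[of \<tau> f] msubst_sum msubst_mult msubst_mconst by (simp add: msubst_mon[of _ f])
qed

lemma msubst_cong:
  assumes "f \<in> polys_in N" "\<And>i. i < N \<Longrightarrow> \<sigma> i = \<tau> i"
  shows "msubst \<sigma> f = msubst \<tau> f"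
  unfolding msubst_mon
proof (rule sum.cong[OF refl])
  fix m assume "m \<in> keys f"
  then have "keys m \<subseteq> {..<N}" using assms(1) by (auto simp: polys_in_def)
  then have "mon \<sigma> m = mon \<tau> m"
    unfolding mon_def using assms(2) by (intro prod.cong) auto
  then show "mconst (lookup f m) * mon \<sigma> m = mconst (lookup f m) * mon \<tau> m" by simp
qed

lemma prod_singles: "(\<Prod>i\<in>A. single (g i) (1::'k::comm_ring_1)) = single (\<Sum>i\<in>A. g i) 1"
  by (induction A rule: infinite_finite_induct) (simp_all add: mult_single)


lemma mvar_power: "(mvar i :: 'k::comm_ring_1 mpoly) ^ k = single (single i k) 1"
  by (induction k) (simp_all add: mvar_def mult_single single_add[symmetric] mult.commute)

lemma mvar_mult_single: "mvar i * single m c = single (single i 1 + m) c"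
  by (simp add: mvar_def mult_single)


lemma mon_mvar: "mon mvar m = (single m 1 :: 'k::comm_ring_1 mpoly)"
proof -
  have "mon mvar m = (\<Prod>i\<in>keys m. single (single i (lookup m i)) (1::'k))"
    by (simp add: mon_def mvar_power)
  also have "\<dots> = single (\<Sum>i\<in>keys m. single i (lookup m i)) 1"
    by (rule prod_singles)
  finally show ?thesis by (simp flip: poly_expand)
qed

lemma msubst_id[simp]: "msubst mvar f = f"
  by (simp add: msubst_mon mon_mvar mconst_mult_single flip: poly_expand)

definition keep_vars :: "nat set \<Rightarrow> nat \<Rightarrow> 'k::comm_ring_1 mpoly" where
  "keep_vars K i = (if i \<in> K then mvar i else 0)"


lemma mon_keep_vars: "mon (keep_vars K) m = (if keys m \<subseteq> K then single m 1 else 0)"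
proof (cases "keys m \<subseteq> K")
  case True
  then have "mon (keep_vars K) m = mon mvar m"
    unfolding mon_def keep_vars_def by (intro prod.cong refl) auto
  then show ?thesis using True by (simp add: mon_mvar)
next
  case False
  then obtain i where i: "i \<in> keys m" "i \<notin> K" by auto
  then have "keep_vars K i ^ lookup m i = 0"
    by (simp add: keep_vars_def in_keys_iff zero_power)
  then have "mon (keep_vars K) m = 0" unfolding mon_def using i by (intro prod_zero) auto
  then show ?thesis using False by simp
qed

lemma lookup_keep_vars:
  "lookup (msubst (keep_vars K) f) m = (if keys m \<subseteq> K then lookup f m else 0)"
proof -
  have eq: "msubst (keep_vars K) f = (\<Sum>m'\<in>keys f. if keys m' \<subseteq> K then single m' (lookup f m') else 0)"
    by (simp add: msubst_mon mon_keep_vars mconst_mult_single if_distrib cong: if_cong)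
  have "lookup (msubst (keep_vars K) f) m =
      (\<Sum>m'\<in>keys f. if keys m' \<subseteq> K \<and> m' = m then lookup f m' else 0)"
    unfolding eq lookup_sum by (intro sum.cong refl) (auto simp: lookup_single when_def)
  also have "\<dots> = (\<Sum>m'\<in>keys f. if m' = m then (if keys m \<subseteq> K then lookup f m else 0) else 0)"
    by (intro sum.cong refl) auto
  finally show ?thesis by (simp add: sum.delta in_keys_iff)
qed

lemma keys_keep_vars: "m \<in> keys (msubst (keep_vars K) f) \<Longrightarrow> keys m \<subseteq> K \<and> m \<in> keys f"
  by (auto simp: in_keys_iff lookup_keep_vars split: if_splits)

lemma mvar_mult_expand: "mvar j * c = (\<Sum>m\<in>keys c. single (single j 1 + m) (lookup c m))"
  by (subst (1) poly_expand[of c]) (simp add: sum_distrib_left mvar_mult_single)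

lemma lookup_mvar_mult_shift: "lookup (mvar j * c) (single j 1 + m) = lookup c m"
proof -
  have eq: "single j 1 + m' = single j 1 + m \<longleftrightarrow> m' = m" for m' :: "nat \<Rightarrow>\<^sub>0 nat"
    by (metis add_left_imp_eq)
  have "lookup (mvar j * c) (single j 1 + m) = (\<Sum>m'\<in>keys c. if m' = m then lookup c m' else 0)"
    by (simp add: mvar_mult_expand lookup_sum lookup_single when_def eq)
  then show ?thesis by (simp add: sum.delta in_keys_iff)
qed

lemma lookup_mvar_mult_zero:
  assumes "lookup m j = 0"
  shows "lookup (mvar j * c) m = 0"
proof -
  have "single j 1 + m' \<noteq> m" for m' :: "nat \<Rightarrow>\<^sub>0 nat"
    using assms by (metis add_is_0 lookup_add lookup_single_eq one_neq_zero)
  then show ?thesis by (simp add: mvar_mult_expand lookup_sum lookup_single when_def)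
qed


lemma single_eq_iff: "(k::nat) \<noteq> 0 \<Longrightarrow> single i k = single j k \<longleftrightarrow> i = j"
  by (metis lookup_single_eq lookup_single_not_eq)

lemma single_eq_0_iff: "single i (k::nat) = 0 \<longleftrightarrow> k = 0"
  by (metis lookup_single_eq lookup_zero single_zero)


lemma monomial_split:
  fixes m :: "nat \<Rightarrow>\<^sub>0 nat"
  assumes "lookup m j \<noteq> 0"
  shows "m = single j 1 + (m - single j 1)"
proof (rule poly_mapping_eqI)
  fix i
  show "lookup m i = lookup (single j 1 + (m - single j 1)) i"
    using assms by (cases "i = j") (auto simp: lookup_add lookup_minus lookup_single)
qed


section \<open>Degrees and homogeneous components\<close>


definition mdeg :: "(nat \<Rightarrow>\<^sub>0 nat) \<Rightarrow> nat" where
  "mdeg m = (\<Sum>i\<in>keys m. lookup m i)"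

lemma homogeneous_mdeg: "homogeneous d f \<longleftrightarrow> (\<forall>m\<in>keys f. mdeg m = d)"
  by (simp add: homogeneous_def mdeg_def)


lemma mdeg_superset: "finite S \<Longrightarrow> keys m \<subseteq> S \<Longrightarrow> mdeg m = (\<Sum>i\<in>S. lookup m i)"
  unfolding mdeg_def by (rule sum.mono_neutral_left) (auto simp: in_keys_iff)

lemma mdeg_add: "mdeg (a + b) = mdeg a + mdeg b"
proof -
  let ?S = "keys a \<union> keys b"
  have "mdeg (a + b) = (\<Sum>i\<in>?S. lookup (a + b) i)"
    by (rule mdeg_superset) (use keys_add[of a b] in auto)
  then show ?thesis by (simp add: lookup_add sum.distrib mdeg_superset[symmetric])
qed


lemma mdeg_zero[simp]: "mdeg 0 = 0"
  by (simp add: mdeg_def)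

lemma mdeg_single[simp]: "mdeg (single i k) = k"
  by (simp add: mdeg_def)

lemma mdeg_eq_0: "mdeg m = 0 \<longleftrightarrow> m = 0"
proof
  assume "mdeg m = 0"
  then have "\<forall>i\<in>keys m. lookup m i = 0" by (simp add: mdeg_def)
  then show "m = 0" by (intro poly_mapping_eqI) (metis in_keys_iff lookup_zero)
qed (simp add: mdeg_def)

lemma lookup_le_mdeg: "lookup m i \<le> mdeg m"
  by (cases "i \<in> keys m") (auto simp: mdeg_def in_keys_iff intro: member_le_sum)

lemma mdeg_eq_1:
  assumes "mdeg m = 1"
  obtains j where "m = single j 1"
proof -
  obtain j where j: "j \<in> keys m"
    using assms by (metis mdeg_eq_0 all_not_in_conv keys_eq_empty zero_neq_one)
  have "mdeg m = lookup m j + (\<Sum>i\<in>keys m - {j}. lookup m i)"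
    unfolding mdeg_def using j by (simp add: sum.remove)
  moreover have "lookup m j \<ge> 1" using j by (simp add: in_keys_iff Suc_le_eq)
  ultimately have l1: "lookup m j = 1" and r0: "(\<Sum>i\<in>keys m - {j}. lookup m i) = 0"
    using assms by linarith+
  have "lookup m i = 0" if "i \<noteq> j" for i
  proof (rule ccontr)
    assume "lookup m i \<noteq> 0"
    then have "i \<in> keys m - {j}" using that by (simp add: in_keys_iff)
    then show False using r0 \<open>lookup m i \<noteq> 0\<close> by (simp add: sum_eq_0_iff)
  qed
  then have "m = single j 1"
    using l1 by (intro poly_mapping_eqI) (auto simp: lookup_single when_def)
  then show ?thesis by (rule that)
qed

lemma homogeneous_0[simp]: "homogeneous d 0"
  by (simp add: homogeneous_def)

lemma homogeneous_add: "homogeneous d f \<Longrightarrow> homogeneous d g \<Longrightarrow> homogeneous d (f + g)"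
  using keys_add[of f g] by (auto simp: homogeneous_mdeg)

lemma homogeneous_sum: "(\<And>x. x \<in> A \<Longrightarrow> homogeneous d (f x)) \<Longrightarrow> homogeneous d (sum f A)"
  by (induction A rule: infinite_finite_induct) (auto intro: homogeneous_add)

lemma homogeneous_mult: "homogeneous a f \<Longrightarrow> homogeneous b g \<Longrightarrow> homogeneous (a + b) (f * g)"
  using keys_mult[of f g] by (fastforce simp: homogeneous_mdeg mdeg_add)

lemma homogeneous_power: "homogeneous a f \<Longrightarrow> homogeneous (k * a) (f ^ k)"
proof (induction k)
  case 0 then show ?case by (simp add: homogeneous_mdeg)
next
  case (Suc k) then show ?case using homogeneous_mult[of a f "k * a" "f ^ k"] by (simp add: add.commute)
qed

lemma homogeneous_prod:
  "(\<And>x. x \<in> A \<Longrightarrow> homogeneous (d x) (f x)) \<Longrightarrow> homogeneous (\<Sum>x\<in>A. d x) (prod f A)"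
proof (induction A rule: infinite_finite_induct)
  case (insert x F) then show ?case by (simp add: homogeneous_mult)
qed (simp_all add: homogeneous_mdeg)

lemma homogeneous_mconst: "homogeneous 0 (mconst c)"
  by (simp add: homogeneous_mdeg mconst_def)

lemma homogeneous_mvar: "homogeneous 1 (mvar i)"
  by (simp add: homogeneous_mdeg mvar_def)

lemma homogeneous_mconst_mult: "homogeneous d f \<Longrightarrow> homogeneous d (mconst c * f)"
  using homogeneous_mult[OF homogeneous_mconst] by fastforce

lemma homogeneous_single: "homogeneous (mdeg m) (single m c)"
  by (simp add: homogeneous_mdeg)

lemma homogeneous_mon:
  assumes "\<And>i. i \<in> keys m \<Longrightarrow> homogeneous (dg i) (\<sigma> i)"
  shows "homogeneous (\<Sum>i\<in>keys m. lookup m i * dg i) (mon \<sigma> m)"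
  unfolding mon_def by (rule homogeneous_prod) (use assms homogeneous_power in blast)


lemma homogeneous_0_const:
  assumes "homogeneous 0 f"
  shows "f = mconst (lookup f 0)"
proof (rule poly_mapping_eqI)
  fix m :: "nat \<Rightarrow>\<^sub>0 nat"
  have "m \<noteq> 0 \<Longrightarrow> m \<notin> keys f" using assms by (auto simp: homogeneous_mdeg mdeg_eq_0)
  then show "lookup f m = lookup (mconst (lookup f 0)) m"
    by (cases "m = 0") (auto simp: lookup_mconst in_keys_iff)
qed


lemma homogeneous_keep_vars: "homogeneous d f \<Longrightarrow> homogeneous d (msubst (keep_vars K) f)"
  unfolding homogeneous_mdeg using keys_keep_vars by blast

definition hpart :: "nat \<Rightarrow> 'k::comm_ring_1 mpoly \<Rightarrow> 'k mpoly" where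
  "hpart d f = (\<Sum>m\<in>keys f. if mdeg m = d then single m (lookup f m) else 0)"


lemma lookup_hpart: "lookup (hpart d f) m = (if mdeg m = d then lookup f m else 0)"
proof -
  have "lookup (hpart d f) m = (\<Sum>m'\<in>keys f. if m' = m then (if mdeg m = d then lookup f m else 0) else 0)"
    unfolding hpart_def lookup_sum by (intro sum.cong refl) (auto simp: lookup_single when_def)
  then show ?thesis by (simp add: sum.delta in_keys_iff)
qed

lemma hpart_sum: "hpart d (sum f A) = (\<Sum>x\<in>A. hpart d (f x))"
  by (rule poly_mapping_eqI) (simp add: lookup_hpart lookup_sum)

lemma hpart_homogeneous: "homogeneous e f \<Longrightarrow> hpart d f = (if d = e then f else 0)"
  by (rule poly_mapping_eqI) (auto simp: lookup_hpart homogeneous_mdeg in_keys_iff)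

lemma homogeneous_hpart: "homogeneous d (hpart d f)"
  by (auto simp: homogeneous_mdeg in_keys_iff lookup_hpart split: if_splits)


lemma hpart_mvar_mult: "hpart (Suc d) (mvar j * f) = mvar j * hpart d f"
proof (rule poly_mapping_eqI)
  fix m :: "nat \<Rightarrow>\<^sub>0 nat"
  show "lookup (hpart (Suc d) (mvar j * f)) m = lookup (mvar j * hpart d f) m"
  proof (cases "lookup m j = 0")
    case True then show ?thesis by (simp add: lookup_hpart lookup_mvar_mult_zero)
  next
    case False
    define m' where "m' = m - single j 1"
    have m: "m = single j 1 + m'" unfolding m'_def by (rule monomial_split[OF False])
    show ?thesis unfolding m lookup_hpart lookup_mvar_mult_shift by (simp add: mdeg_add)
  qed
qed

lemma hpart_msubst:
  assumes "\<And>i. homogeneous 1 (\<sigma> i)"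
  shows "hpart d (msubst \<sigma> f) = msubst \<sigma> (hpart d f)"
proof -
  have h: "homogeneous (mdeg m) (mconst c * mon \<sigma> m)" for m c
    using homogeneous_mon[of m "\<lambda>_. 1" \<sigma>] assms by (intro homogeneous_mconst_mult) (simp add: mdeg_def)
  have "hpart d (msubst \<sigma> f) = (\<Sum>m\<in>keys f. if mdeg m = d then mconst (lookup f m) * mon \<sigma> m else 0)"
    unfolding msubst_mon hpart_sum by (intro sum.cong refl) (simp add: hpart_homogeneous[OF h])
  also have "\<dots> = msubst \<sigma> (hpart d f)"
    unfolding hpart_def msubst_sum by (intro sum.cong refl) (simp add: msubst_single)
  finally show ?thesis .
qed

section \<open>Frobenius and finite fields\<close>

lemma frobenius_add_prime:
  fixes a b :: "'a::comm_ring_1"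
  assumes p: "prime p" and char: "of_nat p = (0::'a)"
  shows "(a + b) ^ p = a ^ p + b ^ p"
proof -
  have p0: "p \<noteq> 0" using p by auto
  have "(a + b) ^ p = (\<Sum>k\<le>p. of_nat (p choose k) * a ^ k * b ^ (p - k))"
    by (simp add: binomial_ring)
  also have "\<dots> = (\<Sum>k\<le>p. (if k = 0 then b ^ p else 0) + (if k = p then a ^ p else 0))"
  proof (rule sum.cong[OF refl])
    fix k assume k: "k \<in> {..p}"
    show "of_nat (p choose k) * a ^ k * b ^ (p - k) = (if k = 0 then b ^ p else 0) + (if k = p then a ^ p else 0)"
    proof (cases "k = 0 \<or> k = p")
      case False
      then have "p dvd (p choose k)" using k p p0 by (intro dvd_choose_prime) auto
      then have "of_nat (p choose k) = (0::'a)" using char by (metis dvd_def mult_zero_left of_nat_mult)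
      then show ?thesis using False by simp
    qed (use p0 in auto)
  qed
  also have "\<dots> = a ^ p + b ^ p"
    by (simp add: sum.distrib sum.delta)
  finally show ?thesis .
qed


lemma frobenius_add:
  fixes a b :: "'a::comm_ring_1"
  assumes "prime p" and "of_nat p = (0::'a)"
  shows "(a + b) ^ (p ^ r) = a ^ (p ^ r) + b ^ (p ^ r)"
proof (induction r)
  case (Suc r)
  have "(a + b) ^ (p ^ Suc r) = ((a + b) ^ (p ^ r)) ^ p" by (simp only: power_Suc2 power_mult)
  also have "\<dots> = (a ^ (p ^ r)) ^ p + (b ^ (p ^ r)) ^ p" by (simp add: Suc frobenius_add_prime[OF assms])
  also have "\<dots> = a ^ (p ^ Suc r) + b ^ (p ^ Suc r)" by (simp only: power_Suc2 power_mult)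
  finally show ?case .
qed simp

lemma frobenius_sum:
  fixes f :: "'b \<Rightarrow> 'a::comm_ring_1"
  assumes p: "prime p" and char: "of_nat p = (0::'a)"
  shows "(sum f A) ^ (p ^ r) = (\<Sum>x\<in>A. f x ^ (p ^ r))"
proof (induction A rule: infinite_finite_induct)
  case (insert x F) then show ?case by (simp add: frobenius_add[OF p char])
qed (use p in \<open>simp_all add: zero_power prime_gt_0_nat\<close>)

lemma frobenius_uminus:
  fixes a :: "'a::comm_ring_1"
  assumes p: "prime p" and char: "of_nat p = (0::'a)"
  shows "(- a) ^ (p ^ r) = - (a ^ (p ^ r))"
proof -
  have "(- a) ^ (p ^ r) + a ^ (p ^ r) = (- a + a) ^ (p ^ r)" by (rule frobenius_add[OF p char, symmetric])
  also have "\<dots> = 0" using p by (simp add: zero_power prime_gt_0_nat)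
  finally show ?thesis by (simp add: eq_neg_iff_add_eq_0)
qed


lemma prime_power_ge_2:
  assumes "prime p" "r \<ge> 1"
  shows "p ^ r \<ge> (2::nat)"
proof -
  have "p \<ge> 2" using assms(1) by (rule prime_ge_2_nat)
  moreover have "p ^ 1 \<le> p ^ r" using assms \<open>p \<ge> 2\<close> by (intro power_increasing) auto
  ultimately show ?thesis by simp
qed

lemma of_nat_card_finite_field:
  assumes "finite (UNIV :: 'k::field set)"
  shows "of_nat (card (UNIV :: 'k set)) = (0::'k)"
proof -
  have "(\<Sum>x\<in>UNIV. x) = (\<Sum>x\<in>UNIV. x + (1::'k))"
    by (rule sum.reindex_bij_witness[of _ "\<lambda>x. x + 1" "\<lambda>x. x - 1"]) auto
  also have "\<dots> = (\<Sum>x\<in>UNIV. x) + of_nat (card (UNIV :: 'k set))"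
    by (simp add: sum.distrib)
  finally show ?thesis by simp
qed

lemma finite_field_pow_card:
  assumes fin: "finite (UNIV :: 'k::field set)"
  shows "(t::'k) ^ card (UNIV :: 'k set) = t"
proof (cases "t = 0")
  case True
  have "card (UNIV :: 'k set) \<noteq> 0" using fin by simp
  then show ?thesis using True by (simp add: zero_power)
next
  case False
  let ?A = "UNIV - {0::'k}"
  have "(\<Prod>x\<in>?A. t * x) = (\<Prod>x\<in>?A. x)"
    by (rule prod.reindex_bij_witness[of _ "\<lambda>x. x / t" "\<lambda>x. t * x"]) (use False in auto)
  moreover have "(\<Prod>x\<in>?A. t * x) = t ^ card ?A * (\<Prod>x\<in>?A. x)"
    by (simp add: prod.distrib)
  moreover have "(\<Prod>x\<in>?A. x) \<noteq> 0" using fin by simp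
  ultimately have "t ^ card ?A = 1" by simp
  moreover have "card ?A + 1 = card (UNIV :: 'k set)"
    using fin by (simp add: card_Diff_singleton card_gt_0_iff Suc_le_eq)
  ultimately show ?thesis by (metis power_Suc2 Suc_eq_plus1 mult_1)
qed

lemma constant_poly_fun_top_coeff:
  fixes c :: "nat \<Rightarrow> 'k::field"
  assumes fin: "finite (UNIV :: 'k set)" and d: "1 \<le> d" "d < card (UNIV :: 'k set)"
    and const: "\<And>t. (\<Sum>i\<le>d. c i * t ^ i) = (\<Sum>i\<le>d. c i * 0 ^ i)"
  shows "c d = 0"
proof (rule ccontr)
  assume cd: "c d \<noteq> 0"
  define U where "U = (\<Sum>i\<le>d. monom (c i) i)"
  define V where "V = U - [:poly U 0:]"
  have polyU: "poly U t = (\<Sum>i\<le>d. c i * t ^ i)" for t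
    by (simp add: U_def poly_sum poly_monom)
  have "coeff [:poly U 0:] d = 0" using d by (cases d) auto
  then have "coeff V d = c d" by (simp add: V_def U_def coeff_sum coeff_monom)
  then have V0: "V \<noteq> 0" using cd by auto
  have "degree U \<le> d"
    unfolding U_def by (rule degree_sum_le) (auto intro: order_trans[OF degree_monom_le])
  then have degV: "degree V \<le> d" unfolding V_def by (rule degree_diff_le) simp
  have "{t. poly V t = 0} = UNIV"
    using const by (auto simp: V_def polyU)
  then have "card (UNIV :: 'k set) \<le> degree V" using card_poly_roots_bound[OF V0] by simp
  then show False using degV d by simp
qed


lemma polys_in_add: "f \<in> polys_in N \<Longrightarrow> g \<in> polys_in N \<Longrightarrow> f + g \<in> polys_in N"
  using keys_add[of f g] by (auto simp: polys_in_def)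

lemma polys_in_uminus: "f \<in> polys_in N \<Longrightarrow> - f \<in> polys_in N"
  by (simp add: polys_in_def keys_minus)

lemma polys_in_mult:
  assumes f: "f \<in> polys_in N" and g: "g \<in> polys_in N"
  shows "f * g \<in> polys_in N"
  unfolding polys_in_def mem_Collect_eq
proof
  fix m assume "m \<in> keys (f * g)"
  then obtain a b where ab: "m = a + b" "a \<in> keys f" "b \<in> keys g"
    using keys_mult[of f g] by blast
  then have "keys a \<subseteq> {..<N}" "keys b \<subseteq> {..<N}"
    using f g by (auto simp: polys_in_def)
  then show "keys m \<subseteq> {..<N}" using keys_add[of a b] ab(1) by blast
qed

lemma polys_in_0[simp]: "0 \<in> polys_in N"
  by (simp add: polys_in_def)

lemma polys_in_mconst[simp]: "mconst c \<in> polys_in N"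
  by (simp add: polys_in_def mconst_def)

lemma polys_in_1[simp]: "1 \<in> polys_in N"
  using polys_in_mconst[of 1] by simp

lemma polys_in_mvar: "i < N \<Longrightarrow> mvar i \<in> polys_in N"
  by (simp add: polys_in_def mvar_def)

lemma polys_in_sum: "(\<And>x. x \<in> A \<Longrightarrow> f x \<in> polys_in N) \<Longrightarrow> sum f A \<in> polys_in N"
  by (induction A rule: infinite_finite_induct) (auto intro: polys_in_add)

lemma polys_in_prod: "(\<And>x. x \<in> A \<Longrightarrow> f x \<in> polys_in N) \<Longrightarrow> prod f A \<in> polys_in N"
  by (induction A rule: infinite_finite_induct)
     (auto intro: polys_in_mult simp: polys_in_mconst[of 1, simplified])

lemma polys_in_power: "f \<in> polys_in N \<Longrightarrow> f ^ k \<in> polys_in N"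
  by (induction k) (auto intro: polys_in_mult simp: polys_in_mconst[of 1, simplified])

lemma polys_in_mono: "f \<in> polys_in N \<Longrightarrow> N \<le> M \<Longrightarrow> f \<in> polys_in M"
  unfolding polys_in_def by (auto dest!: bspec)


lemma invariants_add: "f \<in> invariants N G \<Longrightarrow> h \<in> invariants N G \<Longrightarrow> f + h \<in> invariants N G"
  by (simp add: invariants_def mat_act_def msubst_add polys_in_add)

lemma invariants_mult: "f \<in> invariants N G \<Longrightarrow> h \<in> invariants N G \<Longrightarrow> f * h \<in> invariants N G"
  by (simp add: invariants_def mat_act_def msubst_mult polys_in_mult)

lemma invariants_mconst: "mconst c \<in> invariants N G"
  by (simp add: invariants_def mat_act_def)

lemma invariants_sum: "(\<And>x. x \<in> A \<Longrightarrow> f x \<in> invariants N G) \<Longrightarrow> sum f A \<in> invariants N G"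
  by (induction A rule: infinite_finite_induct)
     (auto intro: invariants_add simp: invariants_mconst[of 0, simplified])

lemma invariants_prod: "(\<And>x. x \<in> A \<Longrightarrow> f x \<in> invariants N G) \<Longrightarrow> prod f A \<in> invariants N G"
  by (induction A rule: infinite_finite_induct)
     (auto intro: invariants_mult simp: invariants_mconst[of 1, simplified])

lemma invariants_power: "f \<in> invariants N G \<Longrightarrow> f ^ k \<in> invariants N G"
  by (induction k) (auto intro: invariants_mult simp: invariants_mconst[of 1, simplified])

lemma invariants_msubst:
  assumes "\<And>i. i < M \<Longrightarrow> F i \<in> invariants N G" "P \<in> polys_in M"
  shows "msubst F P \<in> invariants N G"
  unfolding msubst_mon mon_def
proof (intro invariants_sum invariants_mult invariants_mconst invariants_prod invariants_power)
  fix m i assume "m \<in> keys P" "i \<in> keys m"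
  then have "i < M" using assms(2) by (auto simp: polys_in_def)
  then show "F i \<in> invariants N G" by (rule assms(1))
qed

text \<open>The group acts by degree-preserving substitutions, so homogeneous components of
  invariants are invariant.\<close>
lemma invariants_hpart:
  assumes "f \<in> invariants N G"
  shows "hpart d f \<in> invariants N G"
proof -
  have hom: "homogeneous 1 (\<Sum>j<N. mconst (g i j) * mvar j)" for g :: "nat \<Rightarrow> nat \<Rightarrow> 'a" and i
    by (intro homogeneous_sum homogeneous_mconst_mult homogeneous_mvar)
  have "hpart d f \<in> polys_in N" using assms
    unfolding invariants_def polys_in_def by (auto simp: in_keys_iff lookup_hpart split: if_splits)
  moreover have "mat_act N g (hpart d f) = hpart d f" if "g \<in> G" for g
  proof -
    have "mat_act N g (hpart d f) = hpart d (mat_act N g f)"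
      unfolding mat_act_def by (rule hpart_msubst[symmetric]) (rule hom)
    then show ?thesis using assms that by (simp add: invariants_def)
  qed
  ultimately show ?thesis by (simp add: invariants_def)
qed


definition eval_at :: "(nat \<Rightarrow> 'k::comm_ring_1) \<Rightarrow> 'k mpoly \<Rightarrow> 'k" where
  "eval_at v f = (\<Sum>m\<in>keys f. lookup f m * (\<Prod>i\<in>keys m. v i ^ lookup m i))"

text \<open>Evaluation is substitution by constants, hence a ring homomorphism compatible with
  substitution.\<close>
lemma msubst_const_eval: "msubst (\<lambda>i. mconst (v i)) f = mconst (eval_at v f)"
  by (simp add: msubst_mon mon_def eval_at_def mconst_sum mconst_mult mconst_prod mconst_power)

lemma eval_at_msubst: "eval_at v (msubst \<sigma> f) = eval_at (\<lambda>i. eval_at v (\<sigma> i)) f"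
proof -
  have "mconst (eval_at v (msubst \<sigma> f)) = msubst (\<lambda>i. mconst (v i)) (msubst \<sigma> f)"
    by (simp add: msubst_const_eval)
  also have "\<dots> = msubst (\<lambda>i. mconst (eval_at v (\<sigma> i))) f"
    by (subst msubst_comp) (simp add: msubst_const_eval)
  finally show ?thesis by (simp add: msubst_const_eval)
qed

lemma eval_at_add: "eval_at v (f + g) = eval_at v f + eval_at v g"
  using msubst_const_eval[of v] msubst_add by (metis mconst_add mconst_eq_iff)

lemma eval_at_mult: "eval_at v (f * g) = eval_at v f * eval_at v g"
  using msubst_const_eval[of v] msubst_mult by (metis mconst_mult mconst_eq_iff)

lemma eval_at_mconst[simp]: "eval_at v (mconst c) = c"
  using msubst_const_eval[of v "mconst c"] by simp

lemma eval_at_mvar[simp]: "eval_at v (mvar i) = v i"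
  using msubst_const_eval[of v "mvar i"] by simp


section \<open>The direct summand property forces contracted ideals\<close>

text \<open>For an additive graded map the constant term of \<open>\<pi> f\<close> only depends on the constant term
  of \<open>f\<close>, since all other terms of \<open>f\<close> are mapped to positive degrees.\<close>
lemma graded_map_constant_term:
  assumes add: "\<And>f g. f \<in> polys_in N \<Longrightarrow> g \<in> polys_in N \<Longrightarrow> \<pi> (f + g) = \<pi> f + \<pi> g"
    and zero: "\<pi> 0 = 0"
    and graded: "\<And>d f. f \<in> polys_in N \<Longrightarrow> homogeneous d f \<Longrightarrow> homogeneous d (\<pi> f)"
    and f: "f \<in> polys_in N"
  shows "lookup (\<pi> f) 0 = lookup (\<pi> (mconst (lookup f 0))) 0"
proof -
  have terms: "single m (lookup f m) \<in> polys_in N" if "m \<in> keys f" for m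
    using f that by (auto simp: polys_in_def)
  have pi_sum: "\<pi> (sum g A) = (\<Sum>x\<in>A. \<pi> (g x))"
    if "\<And>x. x \<in> A \<Longrightarrow> g x \<in> polys_in N" for g :: "(nat \<Rightarrow>\<^sub>0 nat) \<Rightarrow> 'a mpoly" and A
    using that by (induction A rule: infinite_finite_induct) (simp_all add: zero add polys_in_sum)
  have "\<pi> f = \<pi> (\<Sum>m\<in>keys f. single m (lookup f m))"
    by (simp flip: poly_expand)
  also have "\<dots> = (\<Sum>m\<in>keys f. \<pi> (single m (lookup f m)))"
    by (rule pi_sum) (rule terms)
  finally have "lookup (\<pi> f) 0 = (\<Sum>m\<in>keys f. lookup (\<pi> (single m (lookup f m))) 0)"
    by (simp add: lookup_sum)
  also have "\<dots> = (\<Sum>m\<in>keys f. if m = 0 then lookup (\<pi> (mconst (lookup f 0))) 0 else 0)"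
  proof (intro sum.cong refl)
    fix m assume m: "m \<in> keys f"
    have "homogeneous (mdeg m) (\<pi> (single m (lookup f m)))"
      by (rule graded[OF terms[OF m] homogeneous_single])
    then have "m \<noteq> 0 \<Longrightarrow> 0 \<notin> keys (\<pi> (single m (lookup f m)))"
      by (auto simp: homogeneous_mdeg mdeg_eq_0)
    then show "lookup (\<pi> (single m (lookup f m))) 0 = (if m = 0 then lookup (\<pi> (mconst (lookup f 0))) 0 else 0)"
      by (auto simp: in_keys_iff mconst_def)
  qed
  also have "\<dots> = lookup (\<pi> (mconst (lookup f 0))) 0"
    using zero by (simp add: sum.delta in_keys_iff mconst_def)
  finally show ?thesis .
qed

lemma direct_summand_contraction:
  fixes a f :: "nat \<Rightarrow> 'k::field mpoly"
  assumes dsp: "direct_summand_property N G"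
    and a: "\<And>j. j \<in> J \<Longrightarrow> a j \<in> invariants N G"
    and f: "\<And>j. j \<in> J \<Longrightarrow> f j \<in> polys_in N"
    and h: "(\<Sum>j\<in>J. a j * f j) \<in> invariants N G"
  shows "\<exists>c. (\<forall>j\<in>J. c j \<in> invariants N G) \<and> (\<Sum>j\<in>J. a j * f j) = (\<Sum>j\<in>J. a j * c j)"
proof -
  let ?I = "invariants N G :: 'k mpoly set"
  obtain \<pi> :: "'k mpoly \<Rightarrow> 'k mpoly" where
    into: "\<And>f. f \<in> polys_in N \<Longrightarrow> \<pi> f \<in> ?I" and
    onto: "\<And>h. h \<in> ?I \<Longrightarrow> \<exists>f\<in>polys_in N. \<pi> f = h" and
    lin: "\<And>a b f g. a \<in> ?I \<Longrightarrow> b \<in> ?I \<Longrightarrow> f \<in> polys_in N \<Longrightarrow> g \<in> polys_in N \<Longrightarrow>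
            \<pi> (a * f + b * g) = a * \<pi> f + b * \<pi> g" and
    graded: "\<And>d f. f \<in> polys_in N \<Longrightarrow> homogeneous d f \<Longrightarrow> homogeneous d (\<pi> f)"
    using dsp unfolding direct_summand_property_def by blast
  have I0: "0 \<in> ?I" and I1: "1 \<in> ?I" using invariants_mconst[of 0] invariants_mconst[of 1] by auto
  have zero: "\<pi> 0 = 0" using lin[OF I0 I0, of 0 0] by simp
  have add: "\<pi> (f + g) = \<pi> f + \<pi> g" if "f \<in> polys_in N" "g \<in> polys_in N" for f g
    using lin[OF I1 I1 that] by simp
  have scale: "\<pi> (b * f) = b * \<pi> f" if "b \<in> ?I" "f \<in> polys_in N" for b f
    using lin[OF that(1) I0 that(2), of 0] zero by simp
  text \<open>\<open>\<pi> 1\<close> is a non-zero constant \<open>\<gamma>\<close>, so \<open>\<pi>\<close> restricted to invariants is multiplication by \<open>\<gamma>\<close>.\<close>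
  define \<gamma> where "\<gamma> = lookup (\<pi> 1) 0"
  have pi1: "\<pi> 1 = mconst \<gamma>"
    unfolding \<gamma>_def by (rule homogeneous_0_const, rule graded) (simp_all add: homogeneous_mconst[of 1, simplified])
  have \<gamma>: "\<gamma> \<noteq> 0"
  proof
    assume "\<gamma> = 0"
    obtain g where g: "g \<in> polys_in N" "\<pi> g = 1" using onto[OF I1] by blast
    have "\<pi> (mconst (lookup g 0) * 1) = mconst (lookup g 0) * \<pi> 1"
      by (rule scale) (simp_all add: invariants_mconst)
    then have "lookup (\<pi> g) 0 = 0"
      using graded_map_constant_term[OF add zero graded g(1)] \<open>\<gamma> = 0\<close> pi1 by simp
    then show False using g(2) by simp
  qed
  define c where "c j = mconst (inverse \<gamma>) * \<pi> (f j)" for j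
  have "(\<Sum>j\<in>J. a j * f j) * mconst \<gamma> = \<pi> (\<Sum>j\<in>J. a j * f j)"
    using scale[OF h, of 1] pi1 by simp
  also have "\<dots> = (\<Sum>j\<in>J. \<pi> (a j * f j))"
  proof -
    have "a j * f j \<in> polys_in N" if "j \<in> J" for j
      using a[OF that] f[OF that] by (simp add: invariants_def polys_in_mult)
    then show ?thesis
      by (induction J rule: infinite_finite_induct) (simp_all add: zero add polys_in_sum)
  qed
  also have "\<dots> = (\<Sum>j\<in>J. a j * \<pi> (f j))"
    using a f by (intro sum.cong refl) (simp add: scale)
  finally have eq: "(\<Sum>j\<in>J. a j * f j) * mconst \<gamma> = (\<Sum>j\<in>J. a j * \<pi> (f j))" .
  have "(\<Sum>j\<in>J. a j * c j) = mconst (inverse \<gamma>) * (\<Sum>j\<in>J. a j * \<pi> (f j))"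
    unfolding c_def sum_distrib_left by (intro sum.cong refl) (simp only: mult.left_commute)
  also have "\<dots> = (\<Sum>j\<in>J. a j * f j) * (mconst \<gamma> * mconst (inverse \<gamma>))"
    unfolding eq[symmetric] by (simp only: mult_ac)
  finally have "(\<Sum>j\<in>J. a j * f j) = (\<Sum>j\<in>J. a j * c j)"
    using \<gamma> by (simp flip: mconst_mult)
  moreover have "c j \<in> ?I" if "j \<in> J" for j
    unfolding c_def using f[OF that] by (intro invariants_mult invariants_mconst into)
  ultimately show ?thesis by blast
qed


section \<open>Polynomial relations: counting and descent\<close>

lemma card_exponent_box:
  fixes I :: "'a set" and A :: "'a \<Rightarrow> 'b::zero set"
  assumes fin: "finite I" and z: "\<And>i. i \<in> I \<Longrightarrow> 0 \<in> A i"
  shows "card {m :: 'a \<Rightarrow>\<^sub>0 'b. keys m \<subseteq> I \<and> (\<forall>i\<in>I. lookup m i \<in> A i)} = card (PiE I A)"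
proof (rule bij_betw_same_card)
  let ?X = "{m :: 'a \<Rightarrow>\<^sub>0 'b. keys m \<subseteq> I \<and> (\<forall>i\<in>I. lookup m i \<in> A i)}"
  show "bij_betw (\<lambda>m. restrict (lookup m) I) ?X (PiE I A)"
  proof (rule bij_betw_imageI)
    show "inj_on (\<lambda>m. restrict (lookup m) I) ?X"
    proof (rule inj_onI)
      fix m1 m2 assume m1: "m1 \<in> ?X" and m2: "m2 \<in> ?X"
        and eq: "restrict (lookup m1) I = restrict (lookup m2) I"
      show "m1 = m2"
      proof (rule poly_mapping_eqI)
        fix i show "lookup m1 i = lookup m2 i"
        proof (cases "i \<in> I")
          case True
          have "restrict (lookup m1) I i = restrict (lookup m2) I i" using eq by simp
          then show ?thesis using True by simp
        next
          case False
          then have "i \<notin> keys m1" "i \<notin> keys m2" using m1 m2 by auto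
          then show ?thesis by (simp add: in_keys_iff)
        qed
      qed
    qed
    show "(\<lambda>m. restrict (lookup m) I) ` ?X = PiE I A"
    proof
      show "(\<lambda>m. restrict (lookup m) I) ` ?X \<subseteq> PiE I A" by auto
      show "PiE I A \<subseteq> (\<lambda>m. restrict (lookup m) I) ` ?X"
      proof
        fix c assume c: "c \<in> PiE I A"
        define f where "f = (\<lambda>i. if i \<in> I then c i else 0)"
        have finf: "finite {i. f i \<noteq> 0}" using fin by (rule finite_subset[rotated]) (auto simp: f_def)
        define m where "m = Abs_poly_mapping f"
        have lm: "lookup m = f" unfolding m_def using finf by simp
        have "m \<in> ?X" using c z by (auto simp: lm f_def in_keys_iff)
        moreover have "restrict (lookup m) I = c"
          using c by (auto simp: lm f_def restrict_def PiE_def extensional_def)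
        ultimately show "c \<in> (\<lambda>m. restrict (lookup m) I) ` ?X" by force
      qed
    qed
  qed
qed

definition supported_polys :: "(nat \<Rightarrow>\<^sub>0 nat) set \<Rightarrow> 'k::comm_ring_1 mpoly set" where
  "supported_polys B = {P. keys P \<subseteq> B}"


lemma card_supported_polys:
  assumes "finite B"
  shows "card (supported_polys B :: 'k::comm_ring_1 mpoly set) = card (UNIV :: 'k set) ^ card B"
proof -
  have "card (supported_polys B :: 'k mpoly set) = card (PiE B (\<lambda>_. UNIV :: 'k set))"
    unfolding supported_polys_def using card_exponent_box[OF assms, of "\<lambda>_. UNIV :: 'k set"] by simp
  then show ?thesis by (simp add: card_PiE assms)
qed

definition exp_box :: "nat set \<Rightarrow> nat \<Rightarrow> (nat \<Rightarrow>\<^sub>0 nat) set" where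
  "exp_box I K = {m. keys m \<subseteq> I \<and> (\<forall>i\<in>I. lookup m i \<in> {0..K})}"


lemma card_exp_box: "finite I \<Longrightarrow> card (exp_box I K) = (K + 1) ^ card I"
  unfolding exp_box_def by (subst card_exponent_box) (auto simp: card_PiE)

lemma finite_exp_box: "finite I \<Longrightarrow> finite (exp_box I K)"
  using card_exp_box[of I K] by (metis card_eq_0_iff add_gr_0 less_numeral_extra(1) zero_less_power less_not_refl3)

definition deg_bounded :: "nat set \<Rightarrow> nat \<Rightarrow> 'k::comm_ring_1 mpoly set" where
  "deg_bounded S D = {P. \<forall>m\<in>keys P. keys m \<subseteq> S \<and> mdeg m \<le> D}"

lemma deg_bounded_add: "f \<in> deg_bounded S D \<Longrightarrow> g \<in> deg_bounded S D \<Longrightarrow> f + g \<in> deg_bounded S D"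
  using keys_add[of f g] unfolding deg_bounded_def by blast

lemma deg_bounded_mono: "f \<in> deg_bounded S D \<Longrightarrow> D \<le> D' \<Longrightarrow> f \<in> deg_bounded S D'"
  unfolding deg_bounded_def by fastforce

lemma deg_bounded_mult: "f \<in> deg_bounded S D1 \<Longrightarrow> g \<in> deg_bounded S D2 \<Longrightarrow> f * g \<in> deg_bounded S (D1 + D2)"
proof -
  assume f: "f \<in> deg_bounded S D1" and g: "g \<in> deg_bounded S D2"
  show ?thesis unfolding deg_bounded_def mem_Collect_eq
  proof
    fix m assume "m \<in> keys (f * g)"
    then obtain a b where ab: "m = a + b" "a \<in> keys f" "b \<in> keys g"
      using keys_mult[of f g] by blast
    have "keys a \<subseteq> S" "keys b \<subseteq> S" "mdeg a \<le> D1" "mdeg b \<le> D2"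
      using f g ab by (auto simp: deg_bounded_def)
    then show "keys m \<subseteq> S \<and> mdeg m \<le> D1 + D2"
      using keys_add[of a b] ab(1) by (auto simp: mdeg_add)
  qed
qed

lemma deg_bounded_mconst: "mconst c \<in> deg_bounded S D"
  by (simp add: deg_bounded_def mconst_def)

lemma deg_bounded_sum: "(\<And>x. x \<in> A \<Longrightarrow> f x \<in> deg_bounded S D) \<Longrightarrow> sum f A \<in> deg_bounded S D"
proof (induction A rule: infinite_finite_induct)
  case (infinite A) then show ?case by (simp add: deg_bounded_def)
next
  case empty then show ?case by (simp add: deg_bounded_def)
next
  case (insert x F) then show ?case by (auto intro: deg_bounded_add)
qed

lemma deg_bounded_power: "f \<in> deg_bounded S D \<Longrightarrow> f ^ k \<in> deg_bounded S (k * D)"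
proof (induction k)
  case 0 then show ?case using deg_bounded_mconst[of 1 S 0] by simp
next
  case (Suc k) then show ?case using deg_bounded_mult[of f S D "f ^ k" "k * D"] by (simp add: add.commute)
qed

lemma deg_bounded_prod: "(\<And>x. x \<in> A \<Longrightarrow> f x \<in> deg_bounded S (D x)) \<Longrightarrow> prod f A \<in> deg_bounded S (\<Sum>x\<in>A. D x)"
proof (induction A rule: infinite_finite_induct)
  case (infinite A) then show ?case using deg_bounded_mconst[of 1 S 0] by simp
next
  case empty then show ?case using deg_bounded_mconst[of 1 S 0] by simp
next
  case (insert x F) then show ?case by (simp add: deg_bounded_mult)
qed

lemma deg_bounded_msubst:
  assumes R: "\<And>a. a < L \<Longrightarrow> R a \<in> deg_bounded S e" and T: "\<forall>m\<in>keys T. keys m \<subseteq> {..<L} \<and> mdeg m \<le> D"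
  shows "msubst R T \<in> deg_bounded S (e * D)"
  unfolding msubst_mon
proof (rule deg_bounded_sum)
  fix m assume m: "m \<in> keys T"
  have "mon R m \<in> deg_bounded S (\<Sum>i\<in>keys m. lookup m i * e)"
    unfolding mon_def
  proof (rule deg_bounded_prod)
    fix i assume "i \<in> keys m"
    then have "i < L" using T m by auto
    then show "R i ^ lookup m i \<in> deg_bounded S (lookup m i * e)" by (intro deg_bounded_power R)
  qed
  moreover have "(\<Sum>i\<in>keys m. lookup m i * e) = e * mdeg m"
    by (simp add: mdeg_def sum_distrib_left mult.commute)
  moreover have "e * mdeg m \<le> e * D" using T m by simp
  ultimately have "mon R m \<in> deg_bounded S (e * D)" by (metis deg_bounded_mono)
  then show "mconst (lookup T m) * mon R m \<in> deg_bounded S (e * D)"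
    using deg_bounded_mult[OF deg_bounded_mconst[of _ S 0]] by fastforce
qed


text \<open>The numerical heart of the counting argument: with \<open>K = (c+1)\<^sup>s\<close>, there are fewer
  exponent vectors in \<open>s\<close> variables bounded by \<open>cK\<close> than in \<open>L > s\<close> variables bounded by \<open>K\<close>.\<close>
lemma counting_inequality:
  fixes c s L :: nat
  assumes "s < L" "c \<ge> 1"
  shows "(c * (c + 1) ^ s + 1) ^ s < ((c + 1) ^ s + 1) ^ L"
proof -
  define K where "K = (c + 1) ^ s"
  have K1: "K \<ge> 1" by (simp add: K_def)
  have "c * K + 1 \<le> (c + 1) * K" using K1 by simp
  then have "(c * K + 1) ^ s \<le> ((c + 1) * K) ^ s" by (rule power_mono) simp
  also have "\<dots> = K * K ^ s" by (simp only: power_mult_distrib K_def[symmetric])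
  also have "\<dots> = K ^ (s + 1)" by simp
  also have "\<dots> < (K + 1) ^ (s + 1)" by (rule power_strict_mono) auto
  also have "\<dots> \<le> (K + 1) ^ L" by (rule power_increasing) (use assms in auto)
  finally show ?thesis by (simp add: K_def)
qed


lemma msubst_exp_box:
  assumes R: "\<And>a. a < L \<Longrightarrow> R a \<in> deg_bounded S e"
    and T: "T \<in> supported_polys (exp_box {..<L} K)"
  shows "msubst R T \<in> supported_polys (exp_box S (e * L * K))"
proof -
  have Tk: "\<forall>m\<in>keys T. keys m \<subseteq> {..<L} \<and> mdeg m \<le> L * K"
  proof
    fix m assume "m \<in> keys T"
    then have m: "m \<in> exp_box {..<L} K" using T by (auto simp: supported_polys_def)
    then have km: "keys m \<subseteq> {..<L}" by (simp add: exp_box_def)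
    have "mdeg m = (\<Sum>i<L. lookup m i)" by (rule mdeg_superset) (use km in auto)
    also have "\<dots> \<le> (\<Sum>i<L. K)" by (rule sum_mono) (use m in \<open>auto simp: exp_box_def\<close>)
    finally show "keys m \<subseteq> {..<L} \<and> mdeg m \<le> L * K" using km by simp
  qed
  have "msubst R T \<in> deg_bounded S (e * (L * K))" by (rule deg_bounded_msubst[OF R Tk])
  then have "keys m \<subseteq> S \<and> lookup m i \<le> e * L * K" if "m \<in> keys (msubst R T)" for m i
    using that lookup_le_mdeg[of m i] by (auto simp: deg_bounded_def mult.assoc)
  then show ?thesis by (auto simp: supported_polys_def exp_box_def)
qed

text \<open>Over a finite field, more than \<open>|S|\<close> polynomials in the variables \<open>S\<close> are algebraically
  dependent: \<open>T \<mapsto> T(R)\<close> maps the polynomials with exponents \<open>\<le> K\<close> into a smaller set, so it is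
  not injective, and a difference of two colliding polynomials is a relation.\<close>
lemma dependent_by_counting:
  fixes R :: "nat \<Rightarrow> 'k::field mpoly"
  assumes fin: "finite (UNIV :: 'k set)" and S: "finite S" and L: "card S < L"
    and R: "\<And>a. a < L \<Longrightarrow> R a \<in> deg_bounded S e" and e: "e \<ge> 1"
  obtains T where "T \<in> polys_in L" "T \<noteq> 0" "msubst R T = 0"
proof -
  define K where "K = (e * L + 1) ^ card S"
  define A where "A = (supported_polys (exp_box {..<L} K) :: 'k mpoly set)"
  define B where "B = (supported_polys (exp_box S (e * L * K)) :: 'k mpoly set)"
  have finite_boxes: "finite (exp_box {..<L} K)" "finite (exp_box S (e * L * K))"
    by (simp_all add: finite_exp_box S)
  have "card (UNIV :: 'k set) \<ge> card {0, 1::'k}" using fin by (intro card_mono) auto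
  then have Q2: "card (UNIV :: 'k set) \<ge> 2" by simp
  have "card (exp_box S (e * L * K)) < card (exp_box {..<L} K)"
    using counting_inequality[OF L, of "e * L"] e L S by (simp add: card_exp_box K_def)
  then have "card B < card A"
    using Q2 by (simp add: A_def B_def card_supported_polys finite_boxes)
  moreover have "finite B"
    using Q2 card_supported_polys[OF finite_boxes(2), where 'k='k] by (intro card_ge_0_finite) (simp add: B_def)
  moreover have "msubst R ` A \<subseteq> B"
    using msubst_exp_box[OF R] by (auto simp: A_def B_def)
  ultimately have "\<not> inj_on (msubst R) A"
    using card_inj_on_le[of "msubst R" A B] by linarith
  then obtain T1 T2 where T: "T1 \<in> A" "T2 \<in> A" "T1 \<noteq> T2" "msubst R T1 = msubst R T2"
    unfolding inj_on_def by blast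
  have "keys (T1 - T2) \<subseteq> keys T1 \<union> keys T2"
    by (auto simp: in_keys_iff lookup_minus)
  then have "T1 - T2 \<in> polys_in L"
    using T(1,2) by (auto simp: polys_in_def A_def supported_polys_def exp_box_def)
  moreover have "T1 - T2 \<noteq> 0" "msubst R (T1 - T2) = 0"
    using T(3,4) by (simp_all add: msubst_diff)
  ultimately show ?thesis by (rule that)
qed

lemma deg_bounded_exists:
  fixes L :: nat
  assumes "\<And>a m. a < L \<Longrightarrow> m \<in> keys (R a) \<Longrightarrow> keys m \<subseteq> S"
  obtains e where "e \<ge> 1" "\<And>a. a < L \<Longrightarrow> R a \<in> deg_bounded S e"
proof
  define e where "e = 1 + (\<Sum>a<L. \<Sum>m\<in>keys (R a). mdeg m)"
  show "e \<ge> 1" by (simp add: e_def)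
  fix a assume a: "a < L"
  have "mdeg m \<le> e" if "m \<in> keys (R a)" for m
  proof -
    have "mdeg m \<le> (\<Sum>m\<in>keys (R a). mdeg m)" by (rule member_le_sum) (use that in auto)
    also have "\<dots> \<le> (\<Sum>a<L. \<Sum>m\<in>keys (R a). mdeg m)"
      by (rule member_le_sum[where f = "\<lambda>a. \<Sum>m\<in>keys (R a). mdeg m"]) (use a in auto)
    finally show ?thesis by (simp add: e_def)
  qed
  then show "R a \<in> deg_bounded S e" using assms[OF a] by (auto simp: deg_bounded_def)
qed

lemma vanishing_restriction_in_ideal:
  fixes P :: "'k::comm_ring_1 mpoly"
  assumes P: "P \<in> polys_in N" and z: "msubst (keep_vars S) P = 0"
  shows "\<exists>Q. (\<forall>i. Q i \<in> polys_in N) \<and> P = (\<Sum>i\<in>{..<N} - S. mvar i * Q i)"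
proof -
  have ex: "\<exists>i. i \<in> keys m \<and> i \<notin> S" if m: "m \<in> keys P" for m
  proof (rule ccontr)
    assume "\<not> ?thesis"
    then have "keys m \<subseteq> S" by blast
    then have "lookup (msubst (keep_vars S) P) m = lookup P m" by (simp add: lookup_keep_vars)
    then show False using z m by (simp add: in_keys_iff)
  qed
  define ix where "ix m = (SOME i. i \<in> keys m \<and> i \<notin> S)" for m :: "nat \<Rightarrow>\<^sub>0 nat"
  have ix: "ix m \<in> keys m \<and> ix m \<notin> S" if "m \<in> keys P" for m
    unfolding ix_def using someI_ex[OF ex[OF that]] .
  have ixN: "ix m \<in> {..<N} - S" if "m \<in> keys P" for m
    using ix[OF that] that P by (auto simp: polys_in_def)
  define Q where "Q i = (\<Sum>m\<in>{m\<in>keys P. ix m = i}.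
      single (m - single i 1) (lookup P m))" for i
  have "P = (\<Sum>m\<in>keys P. single m (lookup P m))" by (rule poly_expand)
  also have "\<dots> = (\<Sum>m\<in>keys P. mvar (ix m) * single (m - single (ix m) 1) (lookup P m))"
  proof (intro sum.cong refl)
    fix m assume m: "m \<in> keys P"
    have "lookup m (ix m) \<noteq> 0" using ix[OF m] by (simp add: in_keys_iff)
    then have "m = single (ix m) 1 + (m - single (ix m) 1)" by (rule monomial_split)
    then show "single m (lookup P m) = mvar (ix m) * single (m - single (ix m) 1) (lookup P m)"
      by (simp add: mvar_mult_single)
  qed
  also have "\<dots> = (\<Sum>i\<in>{..<N} - S. \<Sum>m\<in>{m\<in>keys P. ix m = i}. mvar (ix m) * single (m - single (ix m) 1) (lookup P m))"
    by (rule sum.group[symmetric]) (use ixN in auto)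
  also have "\<dots> = (\<Sum>i\<in>{..<N} - S. mvar i * Q i)"
    unfolding Q_def sum_distrib_left by (intro sum.cong refl) auto
  finally have eq: "P = (\<Sum>i\<in>{..<N} - S. mvar i * Q i)" .
  have "Q i \<in> polys_in N" for i
    unfolding Q_def
  proof (intro polys_in_sum)
    fix m assume m: "m \<in> {m\<in>keys P. ix m = i}"
    have "keys (m - single i 1) \<subseteq> keys m"
      by (auto simp: in_keys_iff lookup_minus)
    then show "single (m - single i 1) (lookup P m) \<in> polys_in N"
      using m P by (auto simp: polys_in_def)
  qed
  then show ?thesis using eq by blast
qed


lemma factor_out_var:
  fixes T :: "'k::comm_ring_1 mpoly"
  assumes nz: "\<forall>m\<in>keys T. lookup m k \<noteq> 0"
  defines "T1 \<equiv> (\<Sum>m\<in>keys T. single (m - single k 1) (lookup T m))"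
  shows "T = mvar k * T1"
    and "\<forall>m'\<in>keys T1. \<exists>m\<in>keys T. m' = m - single k 1"
    and "T \<in> polys_in L \<Longrightarrow> T1 \<in> polys_in L"
proof -
  have "mvar k * T1 = (\<Sum>m\<in>keys T. single m (lookup T m))"
    unfolding T1_def sum_distrib_left mvar_mult_single
    by (intro sum.cong refl) (metis monomial_split nz)
  then show "T = mvar k * T1" by (simp flip: poly_expand)
  show ks: "\<forall>m'\<in>keys T1. \<exists>m\<in>keys T. m' = m - single k 1"
  proof
    fix m' assume "m' \<in> keys T1"
    then have "lookup T1 m' \<noteq> 0" by (simp add: in_keys_iff)
    then have "(\<Sum>m\<in>keys T. lookup (single (m - single k 1) (lookup T m)) m') \<noteq> 0"
      by (simp add: T1_def lookup_sum)
    then obtain m where "m \<in> keys T" "lookup (single (m - single k 1) (lookup T m)) m' \<noteq> 0"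
      by (meson sum.neutral)
    then show "\<exists>m\<in>keys T. m' = m - single k 1"
      by (auto simp: lookup_single when_def split: if_splits)
  qed
  show "T \<in> polys_in L \<Longrightarrow> T1 \<in> polys_in L"
  proof -
    assume TL: "T \<in> polys_in L"
    show ?thesis unfolding polys_in_def mem_Collect_eq
    proof
      fix m' assume "m' \<in> keys T1"
      then obtain m where m: "m \<in> keys T" "m' = m - single k 1" using ks by blast
      have "keys m' \<subseteq> keys m" using m(2) by (auto simp: in_keys_iff lookup_minus)
      then show "keys m' \<subseteq> {..<L}" using TL m(1) by (auto simp: polys_in_def)
    qed
  qed
qed


text \<open>A relation \<open>T(R) = 0\<close> whose every solution is divisible by the last variable, while
  \<open>R n \<noteq> 0\<close> in the domain \<open>k[V]\<close>, is trivial: dividing by \<open>x\<^sub>n\<close> lowers the \<open>x\<^sub>n\<close>-degree.\<close>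
lemma relation_trivial_by_descent:
  fixes R :: "nat \<Rightarrow> 'k::field mpoly"
  assumes Rn: "R n \<noteq> 0"
    and divisible: "\<And>T. T \<in> polys_in (Suc n) \<Longrightarrow> msubst R T = 0 \<Longrightarrow> \<forall>m\<in>keys T. lookup m n \<noteq> 0"
    and T: "T \<in> polys_in (Suc n)" "msubst R T = 0"
  shows "T = 0"
proof -
  have "T = 0" if "T \<in> polys_in (Suc n)" "msubst R T = 0" "\<forall>m\<in>keys T. lookup m n \<le> B" for T B
    using that
  proof (induction B arbitrary: T)
    case 0
    then show ?case using divisible[OF "0.prems"(1,2)] by (metis keys_eq_empty all_not_in_conv le_zero_eq)
  next
    case (Suc B)
    note nz = divisible[OF Suc.prems(1,2)]
    define T1 where "T1 = (\<Sum>m\<in>keys T. single (m - single n 1) (lookup T m))"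
    have T: "T = mvar n * T1" unfolding T1_def by (rule factor_out_var(1)[OF nz])
    have T1: "T1 \<in> polys_in (Suc n)" unfolding T1_def by (rule factor_out_var(3)[OF nz Suc.prems(1)])
    have "R n * msubst R T1 = 0" using Suc.prems(2) T by (simp add: msubst_mult)
    then have "msubst R T1 = 0" using Rn by simp
    moreover have "\<forall>m\<in>keys T1. lookup m n \<le> B"
    proof
      fix m' assume "m' \<in> keys T1"
      then obtain m where "m \<in> keys T" "m' = m - single n 1"
        using factor_out_var(2)[OF nz] unfolding T1_def by blast
      then show "lookup m' n \<le> B" using Suc.prems(3) by (auto simp: lookup_minus)
    qed
    ultimately have "T1 = 0" using Suc.IH[OF T1] by blast
    then show ?case using T by simp
  qed
  moreover have "\<forall>m\<in>keys T. lookup m n \<le> (\<Sum>m\<in>keys T. lookup m n)"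
    by (auto intro: member_le_sum)
  ultimately show ?thesis using T by blast
qed

text \<open>Exponent vector of the image of \<open>x\<^sup>m\<close> under \<open>x\<^sub>a \<mapsto> y\<^sub>a\<^sup>M\<^sup>a = x\<^sub>n\<^sub>+\<^sub>a\<^sup>M\<^sup>a\<close>.\<close>
definition power_shift :: "nat \<Rightarrow> (nat \<Rightarrow> nat) \<Rightarrow> (nat \<Rightarrow>\<^sub>0 nat) \<Rightarrow> (nat \<Rightarrow>\<^sub>0 nat)" where
  "power_shift n M m = (\<Sum>a\<in>keys m. single (n + a) (M a * lookup m a))"


lemma lookup_power_shift: "lookup (power_shift n M m) (n + a) = M a * lookup m a"
proof -
  have "lookup (power_shift n M m) (n + a) = (\<Sum>b\<in>keys m. if b = a then M a * lookup m a else 0)"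
    unfolding power_shift_def lookup_sum by (intro sum.cong refl) (auto simp: lookup_single)
  then show ?thesis by (simp add: sum.delta in_keys_iff)
qed

lemma power_shift_inj:
  assumes "keys m1 \<subseteq> {..<n}" "keys m2 \<subseteq> {..<n}" "\<And>a. a < n \<Longrightarrow> M a \<ge> 1"
    and "power_shift n M m1 = power_shift n M m2"
  shows "m1 = m2"
proof (rule poly_mapping_eqI)
  fix a show "lookup m1 a = lookup m2 a"
  proof (cases "a < n")
    case True
    have "M a * lookup m1 a = M a * lookup m2 a" using assms(4) lookup_power_shift by metis
    then show ?thesis using assms(3)[OF True] by simp
  next
    case False
    then have "a \<notin> keys m1" "a \<notin> keys m2" using assms(1,2) by auto
    then show ?thesis by (simp add: in_keys_iff)
  qed
qed


lemma mon_power_shift: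
  assumes "keys m \<subseteq> {..<n}" "\<And>a. a < n \<Longrightarrow> \<sigma> a = mvar (n + a) ^ M a"
  shows "mon \<sigma> m = (single (power_shift n M m) 1 :: 'k::comm_ring_1 mpoly)"
proof -
  have "mon \<sigma> m = (\<Prod>a\<in>keys m. single (single (n + a) (M a * lookup m a)) (1::'k))"
    unfolding mon_def
  proof (intro prod.cong refl)
    fix a assume "a \<in> keys m"
    then have "\<sigma> a ^ lookup m a = mvar (n + a) ^ (M a * lookup m a)"
      using assms by (auto simp: power_mult)
    then show "\<sigma> a ^ lookup m a = single (single (n + a) (M a * lookup m a)) 1"
      by (simp only: mvar_power)
  qed
  then show ?thesis unfolding power_shift_def by (simp add: prod_singles)
qed

text \<open>A relation among \<open>y\<^sub>0\<^sup>M\<^sup>0, \<dots>, y\<^sub>n\<^sub>-\<^sub>1\<^sup>M\<^sup>n\<^sup>-\<^sup>1, 0\<close> must have \<open>x\<^sub>n\<close> in each of its monomials: the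
  monomials without \<open>x\<^sub>n\<close> go to distinct monomials, the others to zero.\<close>
lemma relation_divisible_by_last_var:
  fixes T :: "'k::comm_ring_1 mpoly"
  assumes T: "T \<in> polys_in (Suc n)" and powers: "\<And>a. a < n \<Longrightarrow> \<sigma> a = mvar (n + a) ^ M a"
    and last: "\<sigma> n = 0" and M: "\<And>a. a < n \<Longrightarrow> M a \<ge> 1" and rel: "msubst \<sigma> T = 0"
  shows "\<forall>m\<in>keys T. lookup m n \<noteq> 0"
proof (rule ccontr)
  assume "\<not> ?thesis"
  then obtain m0 where m0: "m0 \<in> keys T" "lookup m0 n = 0" by blast
  have low: "keys m \<subseteq> {..<n}" if "m \<in> keys T" "lookup m n = 0" for m
  proof -
    have "keys m \<subseteq> {..<Suc n}" using T that(1) by (auto simp: polys_in_def)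
    moreover have "n \<notin> keys m" using that(2) by (simp add: in_keys_iff)
    ultimately show ?thesis using less_Suc_eq by auto
  qed
  have term_image: "lookup (mconst (lookup T m) * mon \<sigma> m) (power_shift n M m0) = (if m = m0 then lookup T m else 0)"
    if m: "m \<in> keys T" for m
  proof (cases "lookup m n = 0")
    case True
    have "power_shift n M m = power_shift n M m0 \<longleftrightarrow> m = m0"
      using power_shift_inj[OF low[OF m True] low[OF m0] M] by auto
    then show ?thesis using mon_power_shift[OF low[OF m True] powers]
      by (simp add: mconst_mult_single lookup_single when_def)
  next
    case False
    then have "n \<in> keys m" "\<sigma> n ^ lookup m n = 0" by (simp_all add: in_keys_iff last zero_power)
    then have "mon \<sigma> m = 0" unfolding mon_def by (intro prod_zero) auto
    then show ?thesis using False m0 by auto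
  qed
  have "0 = lookup (msubst \<sigma> T) (power_shift n M m0)" using rel by simp
  also have "\<dots> = (\<Sum>m\<in>keys T. if m = m0 then lookup T m else 0)"
    unfolding msubst_mon lookup_sum by (intro sum.cong refl) (rule term_image)
  also have "\<dots> = lookup T m0" using m0 by (simp add: sum.delta)
  finally show False using m0(1) by (simp add: in_keys_iff)
qed

lemma independent_by_specialisation:
  fixes R :: "nat \<Rightarrow> 'k::field mpoly"
  assumes powers: "\<And>a. a < n \<Longrightarrow> msubst \<theta> (R a) = mvar (n + a) ^ M a"
    and M: "\<And>a. a < n \<Longrightarrow> M a \<ge> 1" and last: "msubst \<theta> (R n) = 0" and Rn: "R n \<noteq> 0"
    and T: "T \<in> polys_in (Suc n)" "msubst R T = 0"
  shows "T = 0"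
proof (rule relation_trivial_by_descent[OF Rn _ T])
  fix T assume T: "T \<in> polys_in (Suc n)" "msubst R T = 0"
  define \<sigma> where "\<sigma> a = (if a < n then mvar (n + a) ^ M a else 0 :: 'k mpoly)" for a
  have "msubst \<sigma> T = msubst (\<lambda>a. msubst \<theta> (R a)) T"
    by (rule msubst_cong[OF T(1)]) (auto simp: \<sigma>_def powers last less_Suc_eq)
  also have "\<dots> = 0" using T(2) by (simp flip: msubst_comp)
  finally have rel: "msubst \<sigma> T = 0" .
  show "\<forall>m\<in>keys T. lookup m n \<noteq> 0"
    by (rule relation_divisible_by_last_var[OF T(1) _ _ M rel]) (simp_all add: \<sigma>_def)
qed

section \<open>Free generators of an invariant ring\<close>

definition free_generators :: "nat \<Rightarrow> (nat \<Rightarrow> nat \<Rightarrow> 'k::comm_ring_1) set \<Rightarrow> (nat \<Rightarrow> 'k mpoly) \<Rightarrow> bool" where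
  "free_generators N G F \<longleftrightarrow>
     (\<forall>i<N. F i \<in> invariants N G \<and> (\<exists>d. homogeneous d (F i))) \<and>
     (\<forall>P\<in>polys_in N. msubst F P = 0 \<longrightarrow> P = 0) \<and>
     (\<forall>f\<in>invariants N G. \<exists>P\<in>polys_in N. f = msubst F P)"


lemma coregular_free_generators: "coregular N G \<longleftrightarrow> (\<exists>F. free_generators N G F)"
  unfolding coregular_def free_generators_def ..


definition gen_deg :: "(nat \<Rightarrow> 'k::comm_ring_1 mpoly) \<Rightarrow> nat \<Rightarrow> nat" where
  "gen_deg F i = (SOME d. homogeneous d (F i))"

lemma free_generators_homogeneous:
  "free_generators N G F \<Longrightarrow> i < N \<Longrightarrow> homogeneous (gen_deg F i) (F i)"
  unfolding free_generators_def gen_deg_def by (metis someI_ex)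

text \<open>No generator is a constant: otherwise \<open>x\<^sub>i - F i\<close> would be a non-zero relation.\<close>
lemma free_generators_deg_pos:
  assumes F: "free_generators N G F" and i: "i < N"
  shows "gen_deg F i \<ge> 1"
proof (rule ccontr)
  assume "\<not> gen_deg F i \<ge> 1"
  then have "gen_deg F i = 0" by simp
  then have "homogeneous 0 (F i)" using free_generators_homogeneous[OF F i] by simp
  then have Fc: "F i = mconst (lookup (F i) 0)" by (rule homogeneous_0_const)
  define P where "P = mvar i - mconst (lookup (F i) 0)"
  have "P \<in> polys_in N" unfolding P_def diff_conv_add_uminus
    using i by (intro polys_in_add polys_in_uminus polys_in_mvar polys_in_mconst)
  moreover have "msubst F P = 0"
    unfolding P_def msubst_diff msubst_mvar msubst_mconst by (simp flip: Fc)
  ultimately have "P = 0" using F by (auto simp: free_generators_def)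
  moreover have "lookup P (single i 1) = 1"
    by (simp add: P_def lookup_minus mvar_def lookup_mconst single_eq_0_iff)
  ultimately show False by simp
qed

lemma weighted_degree_one:
  fixes m :: "nat \<Rightarrow>\<^sub>0 nat"
  assumes pos: "\<And>i. i \<in> keys m \<Longrightarrow> w i \<ge> 1" and one: "(\<Sum>i\<in>keys m. lookup m i * w i) = 1"
  obtains i where "m = single i 1" "w i = 1"
proof -
  have "mdeg m \<le> (\<Sum>i\<in>keys m. lookup m i * w i)"
    unfolding mdeg_def by (intro sum_mono) (use pos in force)
  moreover have "mdeg m \<noteq> 0" using one by (auto simp: mdeg_eq_0)
  ultimately have "mdeg m = 1" using one by linarith
  then obtain i where i: "m = single i 1" by (rule mdeg_eq_1)
  then have "w i = 1" using one by simp
  then show ?thesis using i that by blast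
qed

text \<open>A homogeneous invariant of degree one is a linear combination of the generators of degree
  one: in its expression through the generators only monomials of weighted degree one survive.\<close>
lemma free_generators_degree_one:
  assumes F: "free_generators N G F" and f: "f \<in> invariants N G" "homogeneous 1 f"
  obtains c where "f = (\<Sum>i\<in>{i. i < N \<and> gen_deg F i = 1}. mconst (c i) * F i)"
proof -
  let ?D = "{i. i < N \<and> gen_deg F i = 1}"
  obtain P where P: "P \<in> polys_in N" "f = msubst F P"
    using F f(1) by (auto simp: free_generators_def)
  define wt where "wt m = (\<Sum>i\<in>keys m. lookup m i * gen_deg F i)" for m
  have kN: "keys m \<subseteq> {..<N}" if "m \<in> keys P" for m
    using P(1) that by (auto simp: polys_in_def)
  have hom: "homogeneous (wt m) (mconst (lookup P m) * mon F m)" if "m \<in> keys P" for m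
    unfolding wt_def using kN[OF that] free_generators_homogeneous[OF F]
    by (intro homogeneous_mconst_mult homogeneous_mon) auto
  have wt1: "\<exists>i\<in>?D. m = single i 1" if m: "m \<in> keys P" "wt m = 1" for m
  proof -
    have "gen_deg F i \<ge> 1" if "i \<in> keys m" for i
      using free_generators_deg_pos[OF F] kN[OF m(1)] that by auto
    then obtain i where i: "m = single i 1" "gen_deg F i = 1"
      using m(2) unfolding wt_def by (rule weighted_degree_one)
    moreover have "i < N" using kN[OF m(1)] i(1) by auto
    ultimately show ?thesis by auto
  qed
  have "f = hpart 1 f" by (simp add: hpart_homogeneous[OF f(2)])
  also have "\<dots> = (\<Sum>m\<in>keys P. if wt m = 1 then mconst (lookup P m) * mon F m else 0)"
    unfolding P(2) msubst_mon hpart_sum by (intro sum.cong refl) (auto simp: hpart_homogeneous[OF hom])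
  also have "\<dots> = (\<Sum>m\<in>{m\<in>keys P. wt m = 1}. mconst (lookup P m) * mon F m)"
    by (simp add: sum.inter_filter)
  also have "\<dots> = (\<Sum>m\<in>(\<lambda>i. single i 1) ` ?D. mconst (lookup P m) * mon F m)"
  proof (rule sum.mono_neutral_left)
    show "{m\<in>keys P. wt m = 1} \<subseteq> (\<lambda>i. single i 1) ` ?D" using wt1 by blast
  qed (auto simp: in_keys_iff wt_def)
  also have "\<dots> = (\<Sum>i\<in>?D. mconst (lookup P (single i 1)) * F i)"
    by (subst sum.reindex) (auto intro: inj_onI simp: mon_def single_eq_iff)
  finally show ?thesis by (rule that)
qed

text \<open>Over a finite field, if \<open>x\<^sub>0, \<dots>, x\<^sub>n\<^sub>-\<^sub>1\<close> lie in the span of \<open>F i\<close> (\<open>i \<in> D\<close>), then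
  \<open>n \<le> |D|\<close>: the \<open>|k|\<^sup>n\<close> linear forms in the \<open>x\<^sub>j\<close> lie among the \<open>|k|\<^sup>|\<^sup>D\<^sup>|\<close> combinations of the \<open>F i\<close>.\<close>
lemma span_dimension_bound:
  fixes F :: "nat \<Rightarrow> 'k::field mpoly"
  assumes fin: "finite (UNIV :: 'k set)" and D: "finite D"
    and span: "\<And>j. j < n \<Longrightarrow> mvar j = (\<Sum>i\<in>D. mconst (\<mu> j i) * F i)"
  shows "n \<le> card D"
proof -
  define \<Phi> where "\<Phi> c = (\<Sum>j<n. mconst (c j) * mvar j :: 'k mpoly)" for c :: "nat \<Rightarrow> 'k"
  define \<Psi> where "\<Psi> d = (\<Sum>i\<in>D. mconst (d i) * F i)" for d :: "nat \<Rightarrow> 'k"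
  have lookup_\<Phi>: "lookup (\<Phi> c) (single j 1) = c j" if "j < n" for c j
  proof -
    have "lookup (\<Phi> c) (single j 1) = (\<Sum>j'<n. if j' = j then c j else 0)"
      unfolding \<Phi>_def lookup_sum
      by (intro sum.cong refl) (auto simp: mvar_def mconst_mult_single lookup_single when_def single_eq_iff)
    then show ?thesis using that by simp
  qed
  have inj: "inj_on \<Phi> (PiE {..<n} (\<lambda>_. UNIV))"
  proof (rule inj_onI)
    fix c1 c2 assume c: "c1 \<in> PiE {..<n} (\<lambda>_. UNIV)" "c2 \<in> PiE {..<n} (\<lambda>_. UNIV)" and "\<Phi> c1 = \<Phi> c2"
    then have "c1 j = c2 j" if "j < n" for j using lookup_\<Phi>[OF that] by metis
    then show "c1 = c2" using c by (metis PiE_arb fun_eq_iff lessThan_iff)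
  qed
  have "\<Phi> c = \<Psi> (\<lambda>i. \<Sum>j<n. c j * \<mu> j i)" for c
  proof -
    have "\<Phi> c = (\<Sum>j<n. mconst (c j) * (\<Sum>i\<in>D. mconst (\<mu> j i) * F i))"
      unfolding \<Phi>_def by (intro sum.cong refl) (simp add: span)
    also have "\<dots> = \<Psi> (\<lambda>i. \<Sum>j<n. c j * \<mu> j i)"
      unfolding \<Psi>_def by (simp add: sum_distrib_left sum_distrib_right mconst_sum mconst_mult mult.assoc)
        (rule sum.swap)
    finally show ?thesis .
  qed
  moreover have "\<Psi> d = \<Psi> (restrict d D)" for d
    unfolding \<Psi>_def by (intro sum.cong refl) simp
  ultimately have sub: "\<Phi> ` PiE {..<n} (\<lambda>_. UNIV) \<subseteq> \<Psi> ` PiE D (\<lambda>_. UNIV)"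
    by (metis (no_types, lifting) image_eqI image_subsetI restrict_PiE_iff UNIV_I)
  let ?Q = "card (UNIV :: 'k set)"
  have "card (UNIV :: 'k set) \<ge> card {0, 1::'k}" using fin by (intro card_mono) auto
  then have Q2: "?Q \<ge> 2" by simp
  have "?Q ^ n = card (\<Phi> ` PiE {..<n} (\<lambda>_. UNIV))"
    by (simp add: card_image[OF inj] card_PiE)
  also have "\<dots> \<le> card (\<Psi> ` PiE D (\<lambda>_. UNIV))"
    by (rule card_mono[OF _ sub]) (use fin D in \<open>auto intro: finite_PiE\<close>)
  also have "\<dots> \<le> card (PiE D (\<lambda>_. UNIV :: 'k set))"
    by (rule card_image_le) (use fin D in \<open>auto intro: finite_PiE\<close>)
  also have "\<dots> = ?Q ^ card D" by (simp add: card_PiE D)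
  finally show ?thesis using Q2 by (simp add: power_le_imp_le_exp)
qed

lemma msubst_keep_vars_absorb:
  assumes P: "P \<in> polys_in N" and vanish: "\<And>i. i < N \<Longrightarrow> i \<notin> S \<Longrightarrow> \<sigma> i = 0"
  shows "msubst \<sigma> P = msubst \<sigma> (msubst (keep_vars S) P)"
proof -
  have "msubst \<sigma> P = msubst (\<lambda>i. msubst \<sigma> (keep_vars S i)) P"
    by (rule msubst_cong[OF P]) (auto simp: keep_vars_def vanish)
  then show ?thesis by (simp add: msubst_comp)
qed

section \<open>The group \<open>G\<^sub>n\<close>\<close>

definition unip_mat :: "nat \<Rightarrow> (nat \<Rightarrow> nat \<Rightarrow> 'k::comm_ring_1) \<Rightarrow> nat \<Rightarrow> nat \<Rightarrow> 'k" where
  "unip_mat n B = (\<lambda>i j. if i = j then 1 else if n \<le> i \<and> i < 2 * n \<and> j < n then B (i - n) j else 0)"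


definition skew_herm :: "nat \<Rightarrow> nat \<Rightarrow> (nat \<Rightarrow> nat \<Rightarrow> 'k::comm_ring_1) set" where
  "skew_herm q n = {B. \<forall>i<n. \<forall>j<n. B i j ^ q = - B j i}"

lemma Gn_eq: "Gn q n = unip_mat n ` skew_herm q n"
  unfolding Gn_def unip_mat_def skew_herm_def by auto

definition lin_form :: "nat \<Rightarrow> (nat \<Rightarrow> nat \<Rightarrow> 'k::comm_ring_1) \<Rightarrow> nat \<Rightarrow> 'k mpoly" where
  "lin_form n B a = (\<Sum>j<n. mconst (B a j) * mvar j)"


definition unip_subst :: "nat \<Rightarrow> (nat \<Rightarrow> nat \<Rightarrow> 'k::comm_ring_1) \<Rightarrow> nat \<Rightarrow> 'k mpoly" where
  "unip_subst n B i = (\<Sum>j<2 * n. mconst (unip_mat n B i j) * mvar j)"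


lemma invariants_Gn_iff:
  "f \<in> invariants (2 * n) (Gn q n) \<longleftrightarrow>
     f \<in> polys_in (2 * n) \<and> (\<forall>B\<in>skew_herm q n. msubst (unip_subst n B) f = f)"
  unfolding invariants_def Gn_eq mat_act_def unip_subst_def[abs_def] by auto


lemma unip_subst_x: "i < n \<Longrightarrow> unip_subst n B i = mvar i"
proof -
  assume i: "i < n"
  have "unip_subst n B i = (\<Sum>j<2 * n. if j = i then mvar j else 0)"
    unfolding unip_subst_def unip_mat_def by (intro sum.cong refl) (use i in auto)
  then show ?thesis using i by (simp add: sum.delta')
qed

lemma unip_subst_y: "a < n \<Longrightarrow> unip_subst n B (n + a) = mvar (n + a) + lin_form n B a"
proof -
  assume a: "a < n"
  have split: "{..<2 * n} = {..<n} \<union> {n..<2 * n}" by auto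
  have "unip_subst n B (n + a) = (\<Sum>j<n. mconst (unip_mat n B (n + a) j) * mvar j)
      + (\<Sum>j\<in>{n..<2 * n}. mconst (unip_mat n B (n + a) j) * mvar j)"
    unfolding unip_subst_def split by (rule sum.union_disjoint) auto
  also have "(\<Sum>j<n. mconst (unip_mat n B (n + a) j) * mvar j) = lin_form n B a"
    unfolding lin_form_def unip_mat_def by (intro sum.cong refl) (use a in auto)
  also have "(\<Sum>j\<in>{n..<2 * n}. mconst (unip_mat n B (n + a) j) * mvar j)
      = (\<Sum>j\<in>{n..<2 * n}. if j = n + a then mvar j else 0)"
    unfolding unip_mat_def by (intro sum.cong refl) auto
  also have "\<dots> = mvar (n + a)" using a by (simp add: sum.delta')
  finally show ?thesis by simp
qed

lemma lin_form_polys: "lin_form n B a \<in> polys_in n"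
  unfolding lin_form_def by (auto intro!: polys_in_sum polys_in_mult polys_in_mvar)

lemma unip_subst_fixes_x_polys: "f \<in> polys_in n \<Longrightarrow> msubst (unip_subst n B) f = f"
  using msubst_cong[of f n "unip_subst n B" mvar] by (simp add: unip_subst_x)


lemma x_invariant: "j < n \<Longrightarrow> (mvar j :: 'k::comm_ring_1 mpoly) \<in> invariants (2 * n) (Gn q n)"
  by (simp add: invariants_Gn_iff unip_subst_x polys_in_mvar)

abbreviation x_to_zero :: "nat \<Rightarrow> 'k::comm_ring_1 mpoly \<Rightarrow> 'k mpoly" where
  "x_to_zero n \<equiv> msubst (keep_vars {i. n \<le> i})"


lemma x_to_zero_linear: "x_to_zero n (\<Sum>j<n. mconst (c j) * mvar j) = 0"
  unfolding msubst_sum by (intro sum.neutral) (auto simp: msubst_mult keep_vars_def)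

section \<open>Invariants of \<open>G\<^sub>n\<close>: the hermitian form and the orbit norms\<close>

definition herm :: "nat \<Rightarrow> nat \<Rightarrow> 'k::comm_ring_1 mpoly" where
  "herm n q = (\<Sum>j<n. mvar j ^ q * mvar (n + j) + mvar j * mvar (n + j) ^ q)"

lemma herm_factored:
  assumes "q \<ge> 1"
  shows "herm n q = (\<Sum>j<n. mvar j * (mvar j ^ (q - 1) * mvar (n + j) + mvar (n + j) ^ q))"
  unfolding herm_def
proof (intro sum.cong refl)
  fix j
  have "mvar j * mvar j ^ (q - 1) = (mvar j ^ q :: 'a mpoly)"
    using assms by (metis Suc_diff_le diff_Suc_1 power_Suc)
  then show "mvar j ^ q * mvar (n + j) + mvar j * mvar (n + j) ^ q =
      (mvar j * (mvar j ^ (q - 1) * mvar (n + j) + mvar (n + j) ^ q) :: 'a mpoly)"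
    by (simp add: distrib_left mult.assoc[symmetric])
qed


lemma herm_polys: "herm n q \<in> polys_in (2 * n)"
  unfolding herm_def by (intro polys_in_sum polys_in_mult polys_in_add polys_in_power polys_in_mvar) auto

lemma herm_homogeneous: "homogeneous (q + 1) (herm n q)"
proof -
  have "homogeneous (q * 1 + 1) (mvar j ^ q * mvar (n + j) :: 'a mpoly)"
    and "homogeneous (1 + q * 1) (mvar j * mvar (n + j) ^ q :: 'a mpoly)" for j
    by (intro homogeneous_mult homogeneous_power homogeneous_mvar)+
  then show ?thesis
    unfolding herm_def by (intro homogeneous_sum homogeneous_add) (auto simp: add.commute)
qed

lemma x_to_zero_herm: "q \<ge> 1 \<Longrightarrow> x_to_zero n (herm n q :: 'k::comm_ring_1 mpoly) = 0"
  unfolding herm_factored msubst_sum by (intro sum.neutral) (auto simp: msubst_mult keep_vars_def)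

text \<open>Invariance of \<open>h\<close>: the cross terms \<open>\<Sum> B\<^sub>j\<^sub>i x\<^sub>j\<^sup>q x\<^sub>i\<close> and \<open>\<Sum> B\<^sub>j\<^sub>i\<^sup>q x\<^sub>j x\<^sub>i\<^sup>q\<close> cancel because
  \<open>B\<^sub>j\<^sub>i\<^sup>q = -B\<^sub>i\<^sub>j\<close> and \<open>t \<mapsto> t\<^sup>q\<close> is additive.\<close>
lemma herm_invariant:
  assumes p: "prime p" and char: "of_nat p = (0::'k::comm_ring_1)" and q: "q = p ^ r"
  shows "(herm n q :: 'k mpoly) \<in> invariants (2 * n) (Gn q n)"
  unfolding invariants_Gn_iff
proof (intro conjI herm_polys ballI)
  fix B :: "nat \<Rightarrow> nat \<Rightarrow> 'k" assume B: "B \<in> skew_herm q n"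
  have charm: "of_nat p = (0::'k mpoly)" by (simp add: of_nat_mpoly char)
  let ?x = "\<lambda>j. mvar j :: 'k mpoly" and ?y = "\<lambda>j. mvar (n + j) :: 'k mpoly"
  let ?L = "lin_form n B"
  have Lq: "?L j ^ q = (\<Sum>i<n. mconst (- B i j) * ?x i ^ q)" if j: "j < n" for j
  proof -
    have "?L j ^ q = (\<Sum>i<n. (mconst (B j i) * ?x i) ^ q)"
      unfolding lin_form_def q by (rule frobenius_sum[OF p charm])
    also have "\<dots> = (\<Sum>i<n. mconst (- B i j) * ?x i ^ q)"
    proof (intro sum.cong refl)
      fix i assume "i \<in> {..<n}"
      then have "B j i ^ q = - B i j" using B j by (auto simp: skew_herm_def)
      then show "(mconst (B j i) * ?x i) ^ q = mconst (- B i j) * ?x i ^ q"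
        by (simp add: power_mult_distrib mconst_power[symmetric])
    qed
    finally show ?thesis .
  qed
  have "msubst (unip_subst n B) (herm n q) = (\<Sum>j<n. ?x j ^ q * (?y j + ?L j) + ?x j * (?y j + ?L j) ^ q)"
    unfolding herm_def msubst_sum
    by (intro sum.cong refl) (simp add: msubst_add msubst_mult msubst_power unip_subst_x unip_subst_y)
  also have "\<dots> = (\<Sum>j<n. ?x j ^ q * ?y j + ?x j * ?y j ^ q)
      + ((\<Sum>j<n. ?x j ^ q * ?L j) + (\<Sum>j<n. ?x j * ?L j ^ q))"
    unfolding q frobenius_add[OF p charm] by (simp add: sum.distrib algebra_simps)
  also have "(\<Sum>j<n. ?x j ^ q * ?L j) = (\<Sum>j<n. \<Sum>i<n. mconst (B j i) * (?x j ^ q * ?x i))"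
    unfolding lin_form_def by (simp add: sum_distrib_left algebra_simps)
  also have "(\<Sum>j<n. ?x j * ?L j ^ q) = (\<Sum>j<n. \<Sum>i<n. mconst (- B i j) * (?x i ^ q * ?x j))"
    by (intro sum.cong refl) (simp add: Lq sum_distrib_left algebra_simps)
  also have "\<dots> = (\<Sum>i<n. \<Sum>j<n. mconst (- B i j) * (?x i ^ q * ?x j))"
    by (rule sum.swap)
  also have "\<dots> = - (\<Sum>j<n. \<Sum>i<n. mconst (B j i) * (?x j ^ q * ?x i))"
    by (simp add: mconst_uminus sum_negf)
  finally show "msubst (unip_subst n B) (herm n q) = herm n q" by (simp add: herm_def)
qed

definition shifts :: "nat \<Rightarrow> nat \<Rightarrow> nat \<Rightarrow> 'k::comm_ring_1 mpoly set" where
  "shifts n q a = (\<lambda>B. lin_form n B a) ` skew_herm q n"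

definition norm_inv :: "nat \<Rightarrow> nat \<Rightarrow> nat \<Rightarrow> 'k::comm_ring_1 mpoly" where
  "norm_inv n q a = (\<Prod>w\<in>shifts n q a. mvar (n + a) + w)"


lemma shifts_finite:
  assumes "finite (UNIV :: 'k::comm_ring_1 set)"
  shows "finite (shifts n q a :: 'k mpoly set)"
proof -
  have "shifts n q a \<subseteq> (\<lambda>c. \<Sum>j<n. mconst (c j) * mvar j) ` PiE {..<n} (\<lambda>_. UNIV :: 'k set)"
  proof
    fix w assume "w \<in> (shifts n q a :: 'k mpoly set)"
    then obtain B where w: "w = lin_form n B a" unfolding shifts_def by blast
    have "w = (\<lambda>c. \<Sum>j<n. mconst (c j) * mvar j) (restrict (B a) {..<n})"
      unfolding w lin_form_def by (intro sum.cong refl) auto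
    moreover have "restrict (B a) {..<n} \<in> PiE {..<n} (\<lambda>_. UNIV :: 'k set)" by simp
    ultimately show "w \<in> (\<lambda>c. \<Sum>j<n. mconst (c j) * mvar j) ` PiE {..<n} (\<lambda>_. UNIV :: 'k set)"
      by (rule image_eqI)
  qed
  moreover have "finite (PiE {..<n} (\<lambda>_. UNIV :: 'k set))" using assms by (intro finite_PiE) auto
  ultimately show ?thesis by (meson finite_imageI finite_subset)
qed

lemma zero_in_shifts:
  assumes "q \<ge> 1"
  shows "(0 :: 'k::comm_ring_1 mpoly) \<in> shifts n q a"
proof -
  have "(\<lambda>i j. 0::'k) \<in> skew_herm q n" using assms by (simp add: skew_herm_def zero_power)
  moreover have "lin_form n (\<lambda>i j. 0::'k) a = 0" by (simp add: lin_form_def)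
  ultimately show ?thesis
    unfolding shifts_def by (intro image_eqI[of _ "\<lambda>B. lin_form n B a" "\<lambda>i j. 0::'k"]) simp_all
qed

lemma shifts_add:
  assumes p: "prime p" and char: "of_nat p = (0::'k::comm_ring_1)" and q: "q = p ^ r"
    and w: "w1 \<in> (shifts n q a :: 'k mpoly set)" "w2 \<in> shifts n q a"
  shows "w1 + w2 \<in> shifts n q a"
proof -
  obtain B1 B2 where B: "B1 \<in> skew_herm q n" "B2 \<in> skew_herm q n" "w1 = lin_form n B1 a" "w2 = lin_form n B2 a"
    using w unfolding shifts_def by blast
  have "(\<lambda>i j. B1 i j + B2 i j) \<in> skew_herm q n"
    unfolding skew_herm_def mem_Collect_eq
  proof (intro allI impI)
    fix i j assume ij: "i < n" "j < n"
    have "(B1 i j + B2 i j) ^ q = B1 i j ^ q + B2 i j ^ q" unfolding q by (rule frobenius_add[OF p char])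
    also have "\<dots> = - B1 j i + - B2 j i" using B(1,2) ij by (simp add: skew_herm_def)
    finally show "(B1 i j + B2 i j) ^ q = - (B1 j i + B2 j i)" by simp
  qed
  moreover have "lin_form n (\<lambda>i j. B1 i j + B2 i j) a = w1 + w2"
    unfolding B(3,4) lin_form_def by (simp only: mconst_add distrib_right sum.distrib)
  ultimately show ?thesis
    unfolding shifts_def by (intro image_eqI[of _ "\<lambda>B. lin_form n B a" "\<lambda>i j. B1 i j + B2 i j"]) simp_all
qed

lemma card_shifts_pos:
  assumes "finite (UNIV :: 'k::comm_ring_1 set)" "q \<ge> 1"
  shows "card (shifts n q a :: 'k mpoly set) \<ge> 1"
proof -
  have "(0 :: 'k mpoly) \<in> shifts n q a" by (rule zero_in_shifts[OF assms(2)])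
  then show ?thesis using shifts_finite[OF assms(1), of n q a] by (auto simp: Suc_le_eq card_gt_0_iff)
qed

text \<open>A group element translates \<open>y\<^sub>a\<close> by a shift \<open>l\<close>; translation by \<open>l\<close> permutes the finite
  group of shifts, so the norm is invariant.\<close>
lemma norm_inv_invariant:
  assumes p: "prime p" and char: "of_nat p = (0::'k::comm_ring_1)" and q: "q = p ^ r"
    and fin: "finite (UNIV :: 'k set)" and a: "a < n"
  shows "(norm_inv n q a :: 'k mpoly) \<in> invariants (2 * n) (Gn q n)"
  unfolding invariants_Gn_iff
proof (intro conjI ballI)
  show "norm_inv n q a \<in> polys_in (2 * n)"
    unfolding norm_inv_def
  proof (intro polys_in_prod polys_in_add)
    show "mvar (n + a) \<in> polys_in (2 * n)" using a by (intro polys_in_mvar) auto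
    fix w assume "w \<in> shifts n q a"
    then obtain B where "w = lin_form n B a" unfolding shifts_def by blast
    moreover have "lin_form n B a \<in> polys_in (2 * n)" by (rule polys_in_mono[OF lin_form_polys]) simp
    ultimately show "w \<in> polys_in (2 * n)" by simp
  qed
  fix B :: "nat \<Rightarrow> nat \<Rightarrow> 'k" assume B: "B \<in> skew_herm q n"
  let ?W = "shifts n q a :: 'k mpoly set"
  let ?l = "lin_form n B a"
  have lW: "?l \<in> ?W" using B unfolding shifts_def by blast
  have "msubst (unip_subst n B) (norm_inv n q a) = (\<Prod>w\<in>?W. mvar (n + a) + (?l + w))"
    unfolding norm_inv_def msubst_prod
  proof (intro prod.cong refl)
    fix w assume "w \<in> ?W"
    then obtain B' where "w = lin_form n B' a" unfolding shifts_def by blast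
    then have "msubst (unip_subst n B) w = w" by (simp add: unip_subst_fixes_x_polys lin_form_polys)
    then show "msubst (unip_subst n B) (mvar (n + a) + w) = mvar (n + a) + (?l + w)"
      using a by (simp add: msubst_add unip_subst_y add.assoc)
  qed
  also have "\<dots> = (\<Prod>w\<in>(\<lambda>w. ?l + w) ` ?W. mvar (n + a) + w)"
    by (rule prod.reindex[symmetric, unfolded comp_def]) (auto intro: inj_onI)
  also have "(\<lambda>w. ?l + w) ` ?W = ?W"
  proof (rule card_subset_eq[OF shifts_finite[OF fin]])
    show "(\<lambda>w. ?l + w) ` ?W \<subseteq> ?W" using shifts_add[OF p char q lW] by auto
    show "card ((\<lambda>w. ?l + w) ` ?W) = card ?W" by (rule card_image) (auto intro: inj_onI)
  qed
  finally show "msubst (unip_subst n B) (norm_inv n q a) = norm_inv n q a" by (simp add: norm_inv_def)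
qed

lemma x_to_zero_norm_inv:
  "x_to_zero n (norm_inv n q a :: 'k::comm_ring_1 mpoly) = mvar (n + a) ^ card (shifts n q a :: 'k mpoly set)"
proof -
  have "x_to_zero n (mvar (n + a) + w) = (mvar (n + a) :: 'k mpoly)" if w: "w \<in> shifts n q a" for w
  proof -
    obtain B :: "nat \<Rightarrow> nat \<Rightarrow> 'k" where "w = lin_form n B a" using w unfolding shifts_def by blast
    then show ?thesis by (simp add: msubst_add x_to_zero_linear[unfolded lin_form_def] lin_form_def keep_vars_def)
  qed
  then show ?thesis unfolding norm_inv_def msubst_prod by simp
qed

section \<open>Invariants contain no pure power \<open>y\<^sub>a\<^sup>d\<close> with \<open>0 < d < q\<^sup>2\<close>\<close>

definition shear_mat :: "nat \<Rightarrow> nat \<Rightarrow> nat \<Rightarrow> 'k::comm_ring_1 \<Rightarrow> nat \<Rightarrow> nat \<Rightarrow> 'k" where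
  "shear_mat q a b t = (\<lambda>i j. if i = a \<and> j = b then t else if i = b \<and> j = a then - (t ^ q) else 0)"

text \<open>Over \<open>k = \<bbbF>\<^sub>q\<^sub>2\<close> it is skew-hermitian, since \<open>(-t\<^sup>q)\<^sup>q = -t\<^sup>q\<^sup>2 = -t\<close>.\<close>
lemma shear_mat_skew_herm:
  assumes p: "prime p" and char: "of_nat p = (0::'k::field)" and q: "q = p ^ r"
    and fin: "finite (UNIV :: 'k set)" and card: "card (UNIV :: 'k set) = q ^ 2" and ab: "a \<noteq> b"
  shows "shear_mat q a b (t::'k) \<in> skew_herm q n"
proof -
  have q1: "q \<ge> 1" using q p by (simp add: prime_gt_0_nat Suc_le_eq)
  have "(- (t ^ q)) ^ q = - ((t ^ q) ^ q)" unfolding q by (rule frobenius_uminus[OF p char])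
  also have "(t ^ q) ^ q = t ^ card (UNIV :: 'k set)" by (simp add: card power_mult[symmetric] power2_eq_square)
  also have "\<dots> = t" by (rule finite_field_pow_card[OF fin])
  finally show ?thesis unfolding skew_herm_def shear_mat_def using ab q1 by (auto simp: zero_power)
qed

definition shear_subst :: "nat \<Rightarrow> nat \<Rightarrow> nat \<Rightarrow> 'k::comm_ring_1 \<Rightarrow> nat \<Rightarrow> 'k mpoly" where
  "shear_subst n a b t i = (if i = n + a then mvar (n + a) + mconst t * mvar b else mvar i)"

text \<open>Modulo all variables except \<open>x\<^sub>b\<close> and \<open>y\<^sub>a\<close>, the group element \<open>shear_mat q a b t\<close> acts as
  \<open>y\<^sub>a \<mapsto> y\<^sub>a + t x\<^sub>b\<close>; hence the part of an invariant in \<open>x\<^sub>b, y\<^sub>a\<close> is invariant under this shear.\<close>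
lemma pair_part_shear_invariant:
  assumes c: "c \<in> invariants (2 * n) (Gn q n)" and ab: "a < n" "b < n" "a \<noteq> b"
    and shear: "shear_mat q a b t \<in> skew_herm q n"
  defines "P \<equiv> msubst (keep_vars {b, n + a}) c"
  shows "msubst (shear_subst n a b t) P = P"
proof -
  let ?K = "{b, n + a}" and ?B = "shear_mat q a b t"
  have cpoly: "c \<in> polys_in (2 * n)" and cfix: "msubst (unip_subst n ?B) c = c"
    using c shear by (auto simp: invariants_Gn_iff)
  have "msubst (shear_subst n a b t) (keep_vars ?K i) = msubst (keep_vars ?K) (unip_subst n ?B i)"
    if i: "i < 2 * n" for i
  proof (cases "i < n")
    case True
    then show ?thesis using ab by (auto simp: unip_subst_x keep_vars_def shear_subst_def)
  next
    case False
    then obtain a' where a': "i = n + a'" "a' < n" using i by (metis add_diff_inverse_nat add_less_imp_less_left mult_2)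
    have "msubst (keep_vars ?K) (lin_form n ?B a') = (\<Sum>j<n. if j = b then mconst (?B a' b) * mvar b else 0)"
      unfolding lin_form_def msubst_sum by (intro sum.cong refl) (auto simp: msubst_mult keep_vars_def)
    also have "\<dots> = mconst (if a' = a then t else 0) * mvar b"
      using ab by (simp add: shear_mat_def)
    finally show ?thesis
      using ab a' by (auto simp: unip_subst_y msubst_add keep_vars_def shear_subst_def)
  qed
  then have "msubst (shear_subst n a b t) P = msubst (keep_vars ?K) (msubst (unip_subst n ?B) c)"
    unfolding P_def msubst_comp by (intro msubst_cong[OF cpoly]) simp
  then show ?thesis using cfix by (simp add: P_def)
qed

lemma eval_binary_form:
  assumes uv: "u \<noteq> v" and hom: "homogeneous d P" and vars: "\<And>m. m \<in> keys P \<Longrightarrow> keys m \<subseteq> {u, v}"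
  shows "eval_at (\<lambda>i. if i = u then s else if i = v then 1 else 0) P
       = (\<Sum>i\<le>d. lookup P (single u i + single v (d - i)) * s ^ i)"
proof -
  define mm where "mm i = single u i + single v (d - i)" for i
  let ?v = "\<lambda>i. if i = u then s else if i = v then 1 else 0"
  have form: "m = mm (lookup m u) \<and> lookup m u \<le> d" if m: "m \<in> keys P" for m
  proof -
    have "mdeg m = (\<Sum>i\<in>{u, v}. lookup m i)" by (rule mdeg_superset) (use vars[OF m] in auto)
    then have sum: "lookup m u + lookup m v = d" using hom m uv by (simp add: homogeneous_mdeg)
    have "m = mm (lookup m u)"
    proof (rule poly_mapping_eqI)
      fix i show "lookup m i = lookup (mm (lookup m u)) i"
        using vars[OF m] uv sum by (cases "i \<in> {u, v}") (auto simp: mm_def lookup_add lookup_single in_keys_iff)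
    qed
    then show ?thesis using sum by auto
  qed
  have "(\<Prod>i\<in>keys m. ?v i ^ lookup m i) = s ^ lookup m u" if "m \<in> keys P" for m
  proof -
    have "(\<Prod>i\<in>keys m. ?v i ^ lookup m i) = (\<Prod>i\<in>{u, v}. ?v i ^ lookup m i)"
      by (rule prod.mono_neutral_left) (use vars[OF that] in \<open>auto simp: in_keys_iff\<close>)
    then show ?thesis using uv by simp
  qed
  then have "eval_at ?v P = (\<Sum>m\<in>keys P. lookup P m * s ^ lookup m u)"
    unfolding eval_at_def by (intro sum.cong refl) simp
  also have "\<dots> = (\<Sum>i\<in>(\<lambda>m. lookup m u) ` keys P. lookup P (mm i) * s ^ i)"
    by (subst sum.reindex) (auto intro!: inj_onI sum.cong dest: form simp: comp_def, metis form)
  also have "\<dots> = (\<Sum>i\<le>d. lookup P (mm i) * s ^ i)"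
  proof (rule sum.mono_neutral_left)
    show "\<forall>i\<in>{..d} - (\<lambda>m. lookup m u) ` keys P. lookup P (mm i) * s ^ i = 0"
    proof
      fix i assume i: "i \<in> {..d} - (\<lambda>m. lookup m u) ` keys P"
      have "lookup (mm i) u = i" using uv by (simp add: mm_def lookup_add lookup_single)
      then have "mm i \<notin> keys P" using i by force
      then show "lookup P (mm i) * s ^ i = 0" by (simp add: in_keys_iff)
    qed
  qed (use form in auto)
  finally show ?thesis by (simp add: mm_def)
qed

text \<open>The central computation: a homogeneous invariant of degree \<open>0 < d < q\<^sup>2\<close> has no \<open>y\<^sub>a\<^sup>d\<close> term.
  Its part \<open>P\<close> in \<open>x\<^sub>b, y\<^sub>a\<close> (\<open>b \<noteq> a\<close>) is shear invariant, so \<open>P(x\<^sub>b = 1, y\<^sub>a = s)\<close> does not depend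
  on \<open>s \<in> k\<close>, while it is a polynomial in \<open>s\<close> of degree \<open>d < |k|\<close> with top coefficient that of \<open>y\<^sub>a\<^sup>d\<close>.\<close>
lemma invariant_no_pure_y_power:
  fixes c :: "'k::field mpoly"
  assumes p: "prime p" and char: "of_nat p = (0::'k)" and q: "q = p ^ r"
    and fin: "finite (UNIV :: 'k set)" and card: "card (UNIV :: 'k set) = q ^ 2"
    and n: "n \<ge> 2" and a: "a < n"
    and c: "c \<in> invariants (2 * n) (Gn q n)" and hom: "homogeneous d c"
    and d: "1 \<le> d" "d < q ^ 2"
  shows "lookup c (single (n + a) d) = 0"
proof -
  define b where "b = (if a = 0 then 1 else 0::nat)"
  have b: "b < n" "b \<noteq> a" "n + a \<noteq> b" using n a by (auto simp: b_def)
  define P where "P = msubst (keep_vars {b, n + a}) c"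
  define v where "v s = (\<lambda>i. if i = n + a then s else if i = b then 1 else (0::'k))" for s
  have Pshear: "msubst (shear_subst n a b t) P = P" for t
    unfolding P_def using shear_mat_skew_herm[OF p char q fin card not_sym[OF b(2)]]
    by (intro pair_part_shear_invariant[OF c a b(1) not_sym[OF b(2)]])
  have "eval_at (v t) P = eval_at (v 0) P" for t
  proof -
    have "(\<lambda>i. eval_at (v 0) (shear_subst n a b t i)) = v t"
      using b by (auto simp: shear_subst_def v_def eval_at_add eval_at_mult)
    then show ?thesis using eval_at_msubst[of "v 0" "shear_subst n a b t" P] by (simp add: Pshear)
  qed
  moreover have "eval_at (v s) P = (\<Sum>i\<le>d. lookup P (single (n + a) i + single b (d - i)) * s ^ i)" for s
    unfolding v_def P_def using b(3) homogeneous_keep_vars[OF hom]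
    by (intro eval_binary_form) (auto dest: keys_keep_vars)
  ultimately have "lookup P (single (n + a) d + single b (d - d)) = 0"
    using fin d card by (intro constant_poly_fun_top_coeff[where c = "\<lambda>i. lookup P (single (n + a) i + single b (d - i))"]) auto
  then show ?thesis by (simp add: P_def lookup_keep_vars split: if_splits)
qed

text \<open>The linear invariants of \<open>G\<^sub>n\<close> are exactly the linear forms in the \<open>x\<^sub>j\<close>: a \<open>y\<^sub>a\<close> term would be a
  pure power of degree one.\<close>
lemma linear_invariants:
  fixes f :: "'k::field mpoly"
  assumes p: "prime p" and char: "of_nat p = (0::'k)" and q: "q = p ^ r" and r: "r \<ge> 1"
    and fin: "finite (UNIV :: 'k set)" and card: "card (UNIV :: 'k set) = q ^ 2" and n: "n \<ge> 2"
    and f: "f \<in> invariants (2 * n) (Gn q n)" "homogeneous 1 f"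
  shows "f = (\<Sum>j<n. mconst (lookup f (single j 1)) * mvar j)"
proof -
  have q2: "q \<ge> 2" using prime_power_ge_2[OF p r] q by simp
  have "2 * 2 \<le> q * q" using mult_le_mono[OF q2 q2] .
  then have "q ^ 2 > 1" by (simp add: power2_eq_square)
  have x_only: "\<exists>j<n. m = single j 1" if m: "m \<in> keys f" for m
  proof -
    have "mdeg m = 1" using f(2) m by (simp add: homogeneous_mdeg)
    then obtain j where j: "m = single j 1" by (rule mdeg_eq_1)
    have "j < 2 * n" using f(1) m j by (auto simp: invariants_def polys_in_def)
    have "\<not> n \<le> j"
    proof
      assume nj: "n \<le> j"
      have a: "j - n < n" using nj \<open>j < 2 * n\<close> by simp
      have "lookup f (single (n + (j - n)) 1) = 0"
        by (rule invariant_no_pure_y_power[OF p char q fin card n a f]) (use \<open>q ^ 2 > 1\<close> in simp_all)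
      then show False using m j nj by (simp add: in_keys_iff)
    qed
    then have "j < n" by simp
    then show ?thesis using j by blast
  qed
  show ?thesis
  proof (rule poly_mapping_eqI)
    fix m
    have "lookup (\<Sum>j<n. mconst (lookup f (single j 1)) * mvar j) m
        = (\<Sum>j<n. if single j 1 = m then lookup f (single j 1) else 0)"
      unfolding lookup_sum by (intro sum.cong refl) (simp add: mvar_def mconst_mult_single lookup_single when_def)
    also have "\<dots> = lookup f m"
    proof (cases "\<exists>j0<n. m = single j0 1")
      case True
      then obtain j0 where j0: "j0 < n" "m = single j0 1" by blast
      then have "(\<Sum>j<n. if single j 1 = m then lookup f (single j 1) else 0)
          = (\<Sum>j<n. if j = j0 then lookup f m else 0)"
        by (intro sum.cong refl) (simp add: single_eq_iff)
      then show ?thesis using j0 by simp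
    next
      case False
      then have "m \<notin> keys f" using x_only by blast
      moreover have "(\<Sum>j<n. if single j 1 = m then lookup f (single j 1) else 0) = 0"
        using False by (intro sum.neutral) auto
      ultimately show ?thesis by (simp add: in_keys_iff)
    qed
    finally show "lookup f m = lookup (\<Sum>j<n. mconst (lookup f (single j 1)) * mvar j) m" by simp
  qed
qed


lemma lookup_herm:
  assumes n: "n \<ge> 2" and q: "q \<ge> 2"
  shows "lookup (herm n q :: 'k::comm_ring_1 mpoly) (single 0 1 + single n q) = 1"
proof -
  let ?m0 = "single 0 1 + single n q :: nat \<Rightarrow>\<^sub>0 nat"
  have l0: "lookup ?m0 0 = 1" and ln: "lookup ?m0 n = q"
    using n by (auto simp: lookup_add lookup_single)
  have first: "single j q + single (n + j) 1 \<noteq> ?m0" if "j < n" for j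
  proof
    assume "single j q + single (n + j) 1 = ?m0"
    then have "lookup (single j q + single (n + j) 1) n = q" using ln by simp
    then show False using that q by (auto simp: lookup_add lookup_single when_def split: if_splits)
  qed
  have second: "single j 1 + single (n + j) q = ?m0 \<longleftrightarrow> j = 0" if "j < n" for j
  proof
    assume "single j 1 + single (n + j) q = ?m0"
    then have "lookup (single j 1 + single (n + j) q) 0 = 1" using l0 by simp
    then show "j = 0" using that n by (auto simp: lookup_add lookup_single when_def split: if_splits)
  qed simp
  have herm: "herm n q = (\<Sum>j<n. single (single j q + single (n + j) 1) (1::'k)
      + single (single j 1 + single (n + j) q) 1)"
    unfolding herm_def by (simp only: mvar_power, simp add: mvar_def mult_single)
  have "lookup (herm n q :: 'k mpoly) ?m0 = (\<Sum>j<n. if j = 0 then 1 else 0)"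
    unfolding herm lookup_sum
  proof (rule sum.cong[OF refl])
    fix j assume "j \<in> {..<n}"
    then show "lookup (single (single j q + single (n + j) 1) (1::'k)
        + single (single j 1 + single (n + j) q) 1) ?m0 = (if j = 0 then 1 else 0)"
      using first second by (simp add: lookup_add lookup_single when_def)
  qed
  then show ?thesis using n by simp
qed

text \<open>\<open>h\<close> is not in the ideal of \<open>k[V]\<^sup>G\<close> generated by the \<open>x\<^sub>j\<close>: in \<open>h = \<Sum> x\<^sub>j c\<^sub>j\<close> the term
  \<open>x\<^sub>0 y\<^sub>0\<^sup>q\<close> of \<open>h\<close> would come from a \<open>y\<^sub>0\<^sup>q\<close> term of the degree-\<open>q\<close> component of \<open>c\<^sub>0\<close>.\<close>
lemma herm_not_in_x_ideal:
  fixes c :: "nat \<Rightarrow> 'k::field mpoly"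
  assumes p: "prime p" and char: "of_nat p = (0::'k)" and q: "q = p ^ r" and r: "r \<ge> 1"
    and fin: "finite (UNIV :: 'k set)" and card: "card (UNIV :: 'k set) = q ^ 2" and n: "n \<ge> 2"
    and c: "\<And>j. j < n \<Longrightarrow> c j \<in> invariants (2 * n) (Gn q n)"
  shows "herm n q \<noteq> (\<Sum>j<n. mvar j * c j)"
proof
  assume eq: "herm n q = (\<Sum>j<n. mvar j * c j)"
  have q2: "q \<ge> 2" using prime_power_ge_2[OF p r] q by simp
  let ?c = "\<lambda>j. hpart q (c j)" and ?m0 = "single 0 1 + single n q :: nat \<Rightarrow>\<^sub>0 nat"
  have "herm n q = hpart (Suc q) (herm n q :: 'k mpoly)"
    by (simp add: hpart_homogeneous[OF herm_homogeneous])
  also have "\<dots> = (\<Sum>j<n. mvar j * ?c j)"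
    unfolding eq hpart_sum hpart_mvar_mult ..
  finally have "1 = lookup (\<Sum>j<n. mvar j * ?c j) ?m0"
    using lookup_herm[OF n q2, where 'k = 'k] by simp
  also have "\<dots> = (\<Sum>j<n. if j = 0 then lookup (?c 0) (single n q) else 0)"
    unfolding lookup_sum
  proof (intro sum.cong refl)
    fix j assume j: "j \<in> {..<n}"
    show "lookup (mvar j * ?c j) ?m0 = (if j = 0 then lookup (?c 0) (single n q) else 0)"
    proof (cases "j = 0")
      case False
      then have "lookup ?m0 j = 0" using j by (auto simp: lookup_add lookup_single)
      then show ?thesis using False by (simp add: lookup_mvar_mult_zero)
    qed (use lookup_mvar_mult_shift[of 0 "?c 0" "single n q"] in simp)
  qed
  also have "\<dots> = lookup (?c 0) (single (n + 0) q)" using n by simp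
  also have "\<dots> = 0"
  proof -
    have "q < q ^ 2" using q2 by (simp add: power2_eq_square)
    moreover have "c 0 \<in> invariants (2 * n) (Gn q n)" using n by (intro c) simp
    ultimately show ?thesis using n q2
      by (intro invariant_no_pure_y_power[OF p char q fin card n _ invariants_hpart homogeneous_hpart]) auto
  qed
  finally show False by simp
qed

section \<open>Failure of the direct summand property\<close>

text \<open>\<open>h = \<Sum> x\<^sub>j (x\<^sub>j\<^sup>q\<^sup>-\<^sup>1 y\<^sub>j + y\<^sub>j\<^sup>q)\<close> is an invariant in the ideal generated by the invariants \<open>x\<^sub>j\<close>, but not
  in the ideal they generate in \<open>k[V]\<^sup>G\<close>.\<close>
lemma not_direct_summand:
  assumes p: "prime p" and char: "of_nat p = (0::'k::field)" and q: "q = p ^ r" and r: "r \<ge> 1"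
    and fin: "finite (UNIV :: 'k set)" and card: "card (UNIV :: 'k set) = q ^ 2" and n: "n \<ge> 2"
  shows "\<not> direct_summand_property (2 * n) (Gn q n :: (nat \<Rightarrow> nat \<Rightarrow> 'k) set)"
proof
  assume dsp: "direct_summand_property (2 * n) (Gn q n :: (nat \<Rightarrow> nat \<Rightarrow> 'k) set)"
  define f where "f j = (mvar j ^ (q - 1) * mvar (n + j) + mvar (n + j) ^ q :: 'k mpoly)" for j
  have herm: "herm n q = (\<Sum>j<n. mvar j * f j)"
    unfolding f_def using prime_power_ge_2[OF p r] q by (intro herm_factored) simp
  have fpoly: "f j \<in> polys_in (2 * n)" if "j < n" for j
    unfolding f_def using that by (intro polys_in_add polys_in_mult polys_in_power polys_in_mvar) auto
  have xinv: "mvar j \<in> invariants (2 * n) (Gn q n :: (nat \<Rightarrow> nat \<Rightarrow> 'k) set)" if "j < n" for j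
    using that by (rule x_invariant)
  have "(\<Sum>j<n. mvar j * f j) \<in> invariants (2 * n) (Gn q n :: (nat \<Rightarrow> nat \<Rightarrow> 'k) set)"
    using herm_invariant[OF p char q, of n] unfolding herm .
  then obtain c where "\<forall>j\<in>{..<n}. c j \<in> invariants (2 * n) (Gn q n)" "(\<Sum>j<n. mvar j * f j) = (\<Sum>j<n. mvar j * c j)"
    using direct_summand_contraction[OF dsp, of "{..<n}" mvar f] xinv fpoly by auto
  then show False using herm_not_in_x_ideal[OF p char q r fin card n, of c] herm by auto
qed

section \<open>Failure of coregularity\<close>

text \<open>Free generators of \<open>k[V]\<^sup>G\<^sup>n\<close>: since the \<open>x\<^sub>j\<close> are invariants of degree one, they are spanned by the
  generators of degree one, so at least \<open>n\<close> of the \<open>2n\<close> generators have degree one.\<close>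
lemma Gn_few_nonlinear_generators:
  fixes F :: "nat \<Rightarrow> 'k::field mpoly"
  assumes fin: "finite (UNIV :: 'k set)" and F: "free_generators (2 * n) (Gn q n) F"
  shows "card {i. i < 2 * n \<and> gen_deg F i \<noteq> 1} \<le> n"
proof -
  let ?D = "{i. i < 2 * n \<and> gen_deg F i = 1}"
  have span: "\<exists>c. mvar j = (\<Sum>i\<in>?D. mconst (c i) * F i)" if j: "j < n" for j
  proof -
    obtain c where "mvar j = (\<Sum>i\<in>?D. mconst (c i) * F i)"
      by (rule free_generators_degree_one[OF F x_invariant[OF j] homogeneous_mvar])
    then show ?thesis by blast
  qed
  define \<mu> where "\<mu> j = (SOME c. mvar j = (\<Sum>i\<in>?D. mconst (c i) * F i))" for j
  have "mvar j = (\<Sum>i\<in>?D. mconst (\<mu> j i) * F i)" if "j < n" for j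
    unfolding \<mu>_def by (rule someI_ex[OF span[OF that]])
  then have "n \<le> card ?D" by (intro span_dimension_bound[OF fin]) auto
  moreover have "card ({i. i < 2 * n \<and> gen_deg F i \<noteq> 1} \<union> ?D)
      = card {i. i < 2 * n \<and> gen_deg F i \<noteq> 1} + card ?D"
    by (rule card_Un_disjoint) auto
  moreover have "{i. i < 2 * n \<and> gen_deg F i \<noteq> 1} \<union> ?D = {..<2 * n}" by auto
  ultimately show ?thesis by simp
qed

text \<open>Writing \<open>h\<close> through free generators, the part involving only non-linear generators is
  non-zero; otherwise \<open>h\<close> would lie in the ideal of \<open>k[V]\<^sup>G\<close> generated by the linear generators,
  which are linear forms in the \<open>x\<^sub>j\<close>.\<close>
lemma herm_nonlinear_part_nonzero:
  fixes F :: "nat \<Rightarrow> 'k::field mpoly"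
  assumes p: "prime p" and char: "of_nat p = (0::'k)" and q: "q = p ^ r" and r: "r \<ge> 1"
    and fin: "finite (UNIV :: 'k set)" and card: "card (UNIV :: 'k set) = q ^ 2" and n: "n \<ge> 2"
    and F: "free_generators (2 * n) (Gn q n) F"
    and P: "P \<in> polys_in (2 * n)" "herm n q = msubst F P"
  shows "msubst (keep_vars {i. i < 2 * n \<and> gen_deg F i \<noteq> 1}) P \<noteq> 0"
proof
  let ?S = "{i. i < 2 * n \<and> gen_deg F i \<noteq> 1}" and ?D = "{i. i < 2 * n \<and> gen_deg F i = 1}"
  let ?I = "invariants (2 * n) (Gn q n) :: 'k mpoly set"
  assume "msubst (keep_vars ?S) P = 0"
  then obtain Q where Q: "\<And>i. Q i \<in> polys_in (2 * n)" and Peq: "P = (\<Sum>i\<in>{..<2 * n} - ?S. mvar i * Q i)"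
    using vanishing_restriction_in_ideal[OF P(1)] by blast
  have D: "{..<2 * n} - ?S = ?D" by auto
  have Finv: "F i \<in> ?I" if "i < 2 * n" for i using F that by (simp add: free_generators_def)
  have Flin: "F i = (\<Sum>j<n. mconst (lookup (F i) (single j 1)) * mvar j)" if i: "i \<in> ?D" for i
  proof -
    have "homogeneous 1 (F i)" using free_generators_homogeneous[OF F, of i] i by simp
    then show ?thesis using i by (intro linear_invariants[OF p char q r fin card n Finv]) auto
  qed
  define u where "u i = msubst F (Q i)" for i
  have u: "u i \<in> ?I" for i unfolding u_def by (rule invariants_msubst[OF Finv Q])
  have "herm n q = (\<Sum>i\<in>?D. F i * u i)"
    using P(2) unfolding Peq D by (simp add: msubst_sum msubst_mult u_def)
  also have "\<dots> = (\<Sum>i\<in>?D. \<Sum>j<n. mvar j * (mconst (lookup (F i) (single j 1)) * u i))"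
  proof (intro sum.cong refl)
    fix i assume "i \<in> ?D"
    then show "F i * u i = (\<Sum>j<n. mvar j * (mconst (lookup (F i) (single j 1)) * u i))"
      by (subst Flin) (simp_all add: sum_distrib_left sum_distrib_right mult_ac)
  qed
  also have "\<dots> = (\<Sum>j<n. mvar j * (\<Sum>i\<in>?D. mconst (lookup (F i) (single j 1)) * u i))"
    by (subst sum.swap) (simp add: sum_distrib_left)
  finally have "herm n q = (\<Sum>j<n. mvar j * (\<Sum>i\<in>?D. mconst (lookup (F i) (single j 1)) * u i))" .
  moreover have "(\<Sum>i\<in>?D. mconst (lookup (F i) (single j 1)) * u i) \<in> ?I" for j
    by (intro invariants_sum invariants_mult invariants_mconst u)
  ultimately show False
    using herm_not_in_x_ideal[OF p char q r fin card n, of "\<lambda>j. \<Sum>i\<in>?D. mconst (lookup (F i) (single j 1)) * u i"]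
    by blast
qed

text \<open>Modulo the \<open>x\<^sub>j\<close> the linear generators vanish, so an invariant written through free generators
  only depends on the part of its expression in the non-linear generators.\<close>
lemma free_generators_mod_x:
  fixes F :: "nat \<Rightarrow> 'k::field mpoly"
  assumes p: "prime p" and char: "of_nat p = (0::'k)" and q: "q = p ^ r" and r: "r \<ge> 1"
    and fin: "finite (UNIV :: 'k set)" and card: "card (UNIV :: 'k set) = q ^ 2" and n: "n \<ge> 2"
    and F: "free_generators (2 * n) (Gn q n) F" and P: "P \<in> polys_in (2 * n)"
  shows "x_to_zero n (msubst F P)
      = msubst (\<lambda>i. x_to_zero n (F i)) (msubst (keep_vars {i. i < 2 * n \<and> gen_deg F i \<noteq> 1}) P)"
proof -
  have "x_to_zero n (F i) = 0" if i: "i < 2 * n" "gen_deg F i = 1" for i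
  proof -
    have "F i \<in> invariants (2 * n) (Gn q n)" using F i by (simp add: free_generators_def)
    moreover have "homogeneous 1 (F i)" using free_generators_homogeneous[OF F i(1)] i by simp
    ultimately have "F i = (\<Sum>j<n. mconst (lookup (F i) (single j 1)) * mvar j)"
      by (rule linear_invariants[OF p char q r fin card n])
    then show ?thesis by (metis x_to_zero_linear)
  qed
  then show ?thesis
    by (subst msubst_comp, intro msubst_keep_vars_absorb[OF P]) auto
qed

text \<open>The main argument: reduce \<open>N\<^sub>0, \<dots>, N\<^sub>n\<^sub>-\<^sub>1, h\<close> modulo the linear generators to \<open>n + 1\<close> polynomials
  in at most \<open>n\<close> variables; they are dependent by counting and independent by specialising \<open>x = 0\<close>.\<close>
lemma not_coregular:
  assumes p: "prime p" and char: "of_nat p = (0::'k::field)" and q: "q = p ^ r" and r: "r \<ge> 1"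
    and fin: "finite (UNIV :: 'k set)" and card: "card (UNIV :: 'k set) = q ^ 2" and n: "n \<ge> 2"
  shows "\<not> coregular (2 * n) (Gn q n :: (nat \<Rightarrow> nat \<Rightarrow> 'k) set)"
proof
  let ?I = "invariants (2 * n) (Gn q n) :: 'k mpoly set"
  assume "coregular (2 * n) (Gn q n :: (nat \<Rightarrow> nat \<Rightarrow> 'k) set)"
  then obtain F :: "nat \<Rightarrow> 'k mpoly" where F: "free_generators (2 * n) (Gn q n) F"
    by (auto simp: coregular_free_generators)
  define S where "S = {i. i < 2 * n \<and> gen_deg F i \<noteq> 1}"
  obtain P where P: "\<And>f. f \<in> ?I \<Longrightarrow> P f \<in> polys_in (2 * n) \<and> msubst F (P f) = f"
    using F unfolding free_generators_def by metis
  define R where "R a = msubst (keep_vars S) (P (if a < n then norm_inv n q a else herm n q))" for a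
  define \<theta> where "\<theta> i = x_to_zero n (F i)" for i
  have reduce: "x_to_zero n f = msubst \<theta> (msubst (keep_vars S) (P f))" if "f \<in> ?I" for f
    using free_generators_mod_x[OF p char q r fin card n F conjunct1[OF P[OF that]]] P[OF that]
    by (simp add: S_def \<theta>_def[abs_def])
  have norm: "norm_inv n q a \<in> ?I" if "a < n" for a by (rule norm_inv_invariant[OF p char q fin that])
  have herm: "herm n q \<in> ?I" by (rule herm_invariant[OF p char q])
  obtain e where e: "e \<ge> 1" "\<And>a. a < Suc n \<Longrightarrow> R a \<in> deg_bounded S e"
    using deg_bounded_exists[of "Suc n" R S] unfolding R_def by (metis keys_keep_vars)
  have S: "finite S" "card S < Suc n"
    using Gn_few_nonlinear_generators[OF fin F] by (simp_all add: S_def)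
  obtain T where T: "T \<in> polys_in (Suc n)" "T \<noteq> 0" "msubst R T = 0"
    by (rule dependent_by_counting[OF fin S e(2) e(1)])
  have "T = 0"
  proof (rule independent_by_specialisation[OF _ _ _ _ T(1,3)])
    show "msubst \<theta> (R a) = mvar (n + a) ^ card (shifts n q a :: 'k mpoly set)" if "a < n" for a
      using reduce[OF norm[OF that]] that by (simp add: R_def x_to_zero_norm_inv)
    show "card (shifts n q a :: 'k mpoly set) \<ge> 1" for a
      using prime_power_ge_2[OF p r] q by (intro card_shifts_pos[OF fin]) simp
    show "msubst \<theta> (R n) = 0" using reduce[OF herm] prime_power_ge_2[OF p r] q by (simp add: R_def x_to_zero_herm)
    show "R n \<noteq> 0"
      using herm_nonlinear_part_nonzero[OF p char q r fin card n F conjunct1[OF P[OF herm]]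
          conjunct2[OF P[OF herm], symmetric]] by (simp add: R_def S_def)
  qed
  then show False using T(2) by simp
qed


theorem mainTheorem3:
  fixes p r q n :: nat
  assumes "prime p" and "r \<ge> 1" and "q = p ^ r"
    and "card (UNIV :: 'k::field set) = q ^ 2"
    and "n \<ge> 2"
  shows "\<not> coregular (2 * n) (Gn q n :: (nat \<Rightarrow> nat \<Rightarrow> 'k) set)
         \<and> \<not> direct_summand_property (2 * n) (Gn q n :: (nat \<Rightarrow> nat \<Rightarrow> 'k) set)"
proof -
  have "q ^ 2 \<noteq> 0" using assms(1,3) by (simp add: prime_gt_0_nat)
  then have fin: "finite (UNIV :: 'k set)" using assms(4) card.infinite by fastforce
  have "(of_nat p :: 'k) ^ (r * 2) = of_nat (card (UNIV :: 'k set))"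
    using assms(3,4) by (simp add: power_mult)
  then have char: "of_nat p = (0::'k)"
    using of_nat_card_finite_field[OF fin] by simp
  show ?thesis
    using not_coregular[OF assms(1) char assms(3,2) fin assms(4,5)]
      not_direct_summand[OF assms(1) char assms(3,2) fin assms(4,5)] by blast
qed

end
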